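(* Let $\mathbb{A}$, its multiplication, the decomposition $A_3=C\oplus L$, the complex $\mathbb{B}=\mathbb{B}(\mathbb{A},C)$ and the ideal $J_C$ be as in the context. Suppose that $\operatorname{grade}J_C\ge 4$. Then $\mathbb{B}$ is acyclic. Moreover, either $\operatorname{grade}J_C=4$ or $J_C=R$.
   Context: Let $R$ be a commutative Noetherian ring and let $p\ge 1$, $q\ge 3$ be integers. Let $\mathbb{A}\colon 0\to A_3\xrightarrow{d_3}A_2\xrightarrow{d_2}A_1\xrightarrow{d_1}A_0=R$ be a complex of finitely generated free $R$-modules with $\operatorname{rank}A_1=p+2$, $\operatorname{rank}A_2=p+q$, $\operatorname{rank}A_3=q-1$, which is acyclic and whose dual complex $\mathbb{A}^*$ is also acyclic (equivalently, $H_0(\mathbb{A})=R/I$ with $I=\operatorname{im}d_1$ either a grade $3$ perfect ideal or the unit ideal). Fix a differential graded algebra structure on $\mathbb{A}$: $R$-bilinear products $A_1\times A_1\to A_2$ (alternating: $e\cdot e=0$, $e\cdot e'=-e'\cdot e$) and $A_1\times A_2\to A_3$ satisfying the Leibniz rules $d_2(e\cdot e')=d_1(e)e'-d_1(e')e$ and $d_3(e\cdot f)=d_1(e)f+d_2(f)\cdot e$ for $e,e'\in A_1$, $f\in A_2$. Fix a decomposition $A_3=C\oplus L$ with $C$ free of rank $q-2$ and $L$ free of rank $1$; let $\eta\colon A_3\to L$ be the projection and $\iota\colon C\to A_3$ the inclusion. Define the sequence $\mathbb{B}=\mathbb{B}(\mathbb{A},C)\colon 0\to C\xrightarrow{\delta_4}A_2\xrightarrow{\delta_3}\operatorname{Hom}(A_1,L)\oplus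 A_1\xrightarrow{\delta_2}\operatorname{Hom}(A_2,L)\xrightarrow{\delta_1}\operatorname{Hom}(C,L)$ by $\delta_4=d_3\circ\iota$; $\delta_3(f)=\big(e\mapsto \eta(e\cdot f),\ d_2(f)\big)$; $\delta_2(\varphi,e)=\big(f\mapsto \varphi(d_2f)+\eta(e\cdot f)\big)$; $\delta_1(\psi)=\psi\circ d_3\circ\iota$. (Up to the twist by $L$, $\delta_2=\delta_3^*$ and $\delta_1=\delta_4^*$.) Let $J_C=I_{q-2}(\delta_4)$ denote the ideal generated by the $(q-2)\times(q-2)$ minors of $\delta_4$. The grade of an ideal $J$ is $\inf\{i:\operatorname{Ext}^i_R(R/J,R)\neq 0\}$ (equal to $\infty$ for $J=R$). *)

theory Defs
  imports "HOL-Combinatorics.Permutations" "HOL-Library.Extended_Nat"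
begin

definition is_ideal :: "'a::comm_ring_1 set \<Rightarrow> bool" where
  "is_ideal I \<longleftrightarrow> 0 \<in> I \<and> (\<forall>x\<in>I. \<forall>y\<in>I. x + y \<in> I) \<and> (\<forall>a. \<forall>x\<in>I. a * x \<in> I)"

definition ideal_gen :: "'a::comm_ring_1 set \<Rightarrow> 'a set" where
  "ideal_gen S = {x. \<exists>T c. finite T \<and> T \<subseteq> S \<and> x = (\<Sum>s\<in>T. c s * s)}"

definition noetherian_ring :: "'a::comm_ring_1 itself \<Rightarrow> bool" where
  "noetherian_ring _ \<longleftrightarrow> (\<forall>I::'a set. is_ideal I \<longrightarrow> (\<exists>S. finite S \<and> I = ideal_gen S))"

text \<open>R^n = functions nat => R vanishing from index n on.\<close>
definition vecs :: "nat \<Rightarrow> (nat \<Rightarrow> 'a::comm_ring_1) set" where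
  "vecs n = {v. \<forall>i\<ge>n. v i = 0}"

definition smul :: "'a::comm_ring_1 \<Rightarrow> (nat \<Rightarrow> 'a) \<Rightarrow> (nat \<Rightarrow> 'a)" where
  "smul a v = (\<lambda>i. a * v i)"

text \<open>A k x m matrix M acting as a map R^m -> R^k.\<close>
definition mat_app :: "nat \<Rightarrow> nat \<Rightarrow> (nat \<Rightarrow> nat \<Rightarrow> 'a::comm_ring_1) \<Rightarrow> (nat \<Rightarrow> 'a) \<Rightarrow> (nat \<Rightarrow> 'a)" where
  "mat_app k m M v = (\<lambda>r. if r < k then (\<Sum>c<m. M r c * v c) else 0)"

definition tr :: "(nat \<Rightarrow> nat \<Rightarrow> 'a) \<Rightarrow> (nat \<Rightarrow> nat \<Rightarrow> 'a)" where
  "tr M = (\<lambda>i j. M j i)"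

definition mker :: "nat \<Rightarrow> nat \<Rightarrow> (nat \<Rightarrow> nat \<Rightarrow> 'a::comm_ring_1) \<Rightarrow> (nat \<Rightarrow> 'a) set" where
  "mker k m M = {v \<in> vecs m. mat_app k m M v = (\<lambda>_. 0)}"

definition mimg :: "nat \<Rightarrow> nat \<Rightarrow> (nat \<Rightarrow> nat \<Rightarrow> 'a::comm_ring_1) \<Rightarrow> (nat \<Rightarrow> 'a) set" where
  "mimg k m M = mat_app k m M ` vecs m"

definition bilinear_on :: "nat \<Rightarrow> nat \<Rightarrow> nat \<Rightarrow> ((nat \<Rightarrow> 'a::comm_ring_1) \<Rightarrow> (nat \<Rightarrow> 'a) \<Rightarrow> (nat \<Rightarrow> 'a)) \<Rightarrow> bool" where
  "bilinear_on a b c P \<longleftrightarrow>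
     (\<forall>u\<in>vecs a. \<forall>v\<in>vecs b. P u v \<in> vecs c) \<and>
     (\<forall>u\<in>vecs a. \<forall>u'\<in>vecs a. \<forall>v\<in>vecs b. P (\<lambda>i. u i + u' i) v = (\<lambda>i. P u v i + P u' v i)) \<and>
     (\<forall>u\<in>vecs a. \<forall>v\<in>vecs b. \<forall>v'\<in>vecs b. P u (\<lambda>i. v i + v' i) = (\<lambda>i. P u v i + P u v' i)) \<and>
     (\<forall>s. \<forall>u\<in>vecs a. \<forall>v\<in>vecs b. P (smul s u) v = smul s (P u v) \<and> P u (smul s v) = smul s (P u v))"

definition lin_fun :: "nat \<Rightarrow> ((nat \<Rightarrow> 'a::comm_ring_1) \<Rightarrow> 'a) set" where
  "lin_fun n = {\<phi>. (\<forall>u\<in>vecs n. \<forall>v\<in>vecs n. \<phi> (\<lambda>i. u i + v i) = \<phi> u + \<phi> v) \<and>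
                   (\<forall>s. \<forall>u\<in>vecs n. \<phi> (smul s u) = s * \<phi> u) \<and>
                   (\<forall>u. u \<notin> vecs n \<longrightarrow> \<phi> u = 0)}"

definition det_nat :: "nat \<Rightarrow> (nat \<Rightarrow> nat \<Rightarrow> 'a::comm_ring_1) \<Rightarrow> 'a" where
  "det_nat k M = (\<Sum>\<sigma>\<in>{\<sigma>. \<sigma> permutes {..<k}}. of_int (sign \<sigma>) * (\<Prod>i<k. M i (\<sigma> i)))"

definition max_minors :: "nat \<Rightarrow> nat \<Rightarrow> (nat \<Rightarrow> nat \<Rightarrow> 'a::comm_ring_1) \<Rightarrow> 'a set" where
  "max_minors m k M = {det_nat k (\<lambda>i j. M (s i) j) | s.
       strict_mono_on {..<k} s \<and> s ` {..<k} \<subseteq> {..<m}}"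

definition minor_ideal :: "nat \<Rightarrow> nat \<Rightarrow> (nat \<Rightarrow> nat \<Rightarrow> 'a::comm_ring_1) \<Rightarrow> 'a set" where
  "minor_ideal m k M = ideal_gen (max_minors m k M)"

text \<open>A free resolution of R/J by finitely generated free modules:
  F_i = R^(n i), n 0 = 1, D i (i >= 1) is the n(i-1) x n(i) matrix of F_i -> F_(i-1),
  im D_1 = J (inside R = R^1), and exactness at every F_i, i >= 1.\<close>
definition free_resolution :: "'a::comm_ring_1 set \<Rightarrow> (nat \<Rightarrow> nat) \<Rightarrow> (nat \<Rightarrow> nat \<Rightarrow> nat \<Rightarrow> 'a) \<Rightarrow> bool" where
  "free_resolution J n D \<longleftrightarrow> n 0 = 1 \<and>
     mimg 1 (n 1) (D 1) = {v \<in> vecs 1. v 0 \<in> J} \<and>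
     (\<forall>i\<ge>1. mker (n (i - 1)) (n i) (D i) = mimg (n i) (n (i + 1)) (D (i + 1)))"

text \<open>Ext^i(R/J,R) = H^i(Hom(F,R)); Hom(F_i,R) = R^(n i), coboundary = transpose.
  Ext is independent of the resolution; we require vanishing for every resolution.\<close>
definition ext_zero :: "'a::comm_ring_1 set \<Rightarrow> nat \<Rightarrow> bool" where
  "ext_zero J i \<longleftrightarrow> (\<forall>n D. free_resolution J n D \<longrightarrow>
      mker (n (i + 1)) (n i) (tr (D (i + 1))) \<subseteq>
        (if i = 0 then {\<lambda>_. 0} else mimg (n i) (n (i - 1)) (tr (D i))))"

definition grade :: "'a::comm_ring_1 set \<Rightarrow> enat" where
  "grade J = (if (\<forall>i. ext_zero J i) then \<infinity> else enat (LEAST i. \<not> ext_zero J i))"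

text \<open>A : 0 -> R^(q-1) -D3-> R^(p+q) -D2-> R^(p+2) -D1-> R^1.
  Acyclic: exact at A_1, A_2, A_3. Dual A^* acyclic: exact at A_0^*, A_1^*, A_2^*.\<close>
definition acyclic_A :: "nat \<Rightarrow> nat \<Rightarrow> (nat \<Rightarrow> nat \<Rightarrow> 'a::comm_ring_1) \<Rightarrow> (nat \<Rightarrow> nat \<Rightarrow> 'a) \<Rightarrow> (nat \<Rightarrow> nat \<Rightarrow> 'a) \<Rightarrow> bool" where
  "acyclic_A p q D1 D2 D3 \<longleftrightarrow>
     mker 1 (p + 2) D1 = mimg (p + 2) (p + q) D2 \<and>
     mker (p + 2) (p + q) D2 = mimg (p + q) (q - 1) D3 \<and>
     mker (p + q) (q - 1) D3 = {\<lambda>_. 0}"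

definition dual_acyclic_A :: "nat \<Rightarrow> nat \<Rightarrow> (nat \<Rightarrow> nat \<Rightarrow> 'a::comm_ring_1) \<Rightarrow> (nat \<Rightarrow> nat \<Rightarrow> 'a) \<Rightarrow> (nat \<Rightarrow> nat \<Rightarrow> 'a) \<Rightarrow> bool" where
  "dual_acyclic_A p q D1 D2 D3 \<longleftrightarrow>
     mker (p + 2) 1 (tr D1) = {\<lambda>_. 0} \<and>
     mker (p + q) (p + 2) (tr D2) = mimg (p + 2) 1 (tr D1) \<and>
     mker (q - 1) (p + q) (tr D3) = mimg (p + q) (p + 2) (tr D2)"

text \<open>DG algebra structure: products m11 : A_1 x A_1 -> A_2 and m12 : A_1 x A_2 -> A_3,
  bilinear, m11 alternating, with the Leibniz rules.  d1(e) is the scalar (D1 e)_0.\<close>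
definition dga_structure :: "nat \<Rightarrow> nat \<Rightarrow> (nat \<Rightarrow> nat \<Rightarrow> 'a::comm_ring_1) \<Rightarrow> (nat \<Rightarrow> nat \<Rightarrow> 'a) \<Rightarrow> (nat \<Rightarrow> nat \<Rightarrow> 'a)
     \<Rightarrow> ((nat \<Rightarrow> 'a) \<Rightarrow> (nat \<Rightarrow> 'a) \<Rightarrow> (nat \<Rightarrow> 'a)) \<Rightarrow> ((nat \<Rightarrow> 'a) \<Rightarrow> (nat \<Rightarrow> 'a) \<Rightarrow> (nat \<Rightarrow> 'a)) \<Rightarrow> bool" where
  "dga_structure p q D1 D2 D3 m11 m12 \<longleftrightarrow>
     bilinear_on (p + 2) (p + 2) (p + q) m11 \<and>
     bilinear_on (p + 2) (p + q) (q - 1) m12 \<and>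
     (\<forall>e\<in>vecs (p + 2). m11 e e = (\<lambda>_. 0)) \<and>
     (\<forall>e\<in>vecs (p + 2). \<forall>e'\<in>vecs (p + 2). m11 e e' = (\<lambda>i. - m11 e' e i)) \<and>
     (\<forall>e\<in>vecs (p + 2). \<forall>e'\<in>vecs (p + 2).
        mat_app (p + 2) (p + q) D2 (m11 e e') =
          (\<lambda>i. mat_app 1 (p + 2) D1 e 0 * e' i - mat_app 1 (p + 2) D1 e' 0 * e i)) \<and>
     (\<forall>e\<in>vecs (p + 2). \<forall>f\<in>vecs (p + q).
        mat_app (p + q) (q - 1) D3 (m12 e f) =
          (\<lambda>i. mat_app 1 (p + 2) D1 e 0 * f i + m11 (mat_app (p + 2) (p + q) D2 f) e i))"

text \<open>C = R^(q-2) embedded by the (q-1) x (q-2) matrix Iota, L = R embedded by the vector Lv;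
  Kap and Eta are the corresponding projections (Eta : A_3 -> L = R), forming a biproduct.\<close>
definition lin_form :: "nat \<Rightarrow> (nat \<Rightarrow> 'a::comm_ring_1) \<Rightarrow> (nat \<Rightarrow> 'a) \<Rightarrow> 'a" where
  "lin_form m w v = (\<Sum>j<m. w j * v j)"

definition id_mat :: "nat \<Rightarrow> nat \<Rightarrow> 'a::comm_ring_1" where
  "id_mat i j = (if i = j then 1 else 0)"

definition mat_mul :: "nat \<Rightarrow> (nat \<Rightarrow> nat \<Rightarrow> 'a::comm_ring_1) \<Rightarrow> (nat \<Rightarrow> nat \<Rightarrow> 'a) \<Rightarrow> (nat \<Rightarrow> nat \<Rightarrow> 'a)" where
  "mat_mul m M N = (\<lambda>i j. \<Sum>l<m. M i l * N l j)"

definition decomposition :: "nat \<Rightarrow> (nat \<Rightarrow> nat \<Rightarrow> 'a::comm_ring_1) \<Rightarrow> (nat \<Rightarrow> 'a) \<Rightarrow> (nat \<Rightarrow> nat \<Rightarrow> 'a) \<Rightarrow> (nat \<Rightarrow> 'a) \<Rightarrow> bool" where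
  "decomposition q Iota Lv Kap Eta \<longleftrightarrow>
     (\<forall>i<q - 2. \<forall>j<q - 2. mat_mul (q - 1) Kap Iota i j = id_mat i j) \<and>
     lin_form (q - 1) Eta Lv = 1 \<and>
     (\<forall>j<q - 2. lin_form (q - 1) Eta (\<lambda>l. Iota l j) = 0) \<and>
     (\<forall>i<q - 2. lin_form (q - 1) (\<lambda>l. Kap i l) Lv = 0) \<and>
     (\<forall>i<q - 1. \<forall>j<q - 1. mat_mul (q - 2) Iota Kap i j + Lv i * Eta j = id_mat i j)"

definition delta4 :: "nat \<Rightarrow> nat \<Rightarrow> (nat \<Rightarrow> nat \<Rightarrow> 'a::comm_ring_1) \<Rightarrow> (nat \<Rightarrow> nat \<Rightarrow> 'a) \<Rightarrow> (nat \<Rightarrow> 'a) \<Rightarrow> (nat \<Rightarrow> 'a)" where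
  "delta4 p q D3 Iota c = mat_app (p + q) (q - 1) D3 (mat_app (q - 1) (q - 2) Iota c)"

definition delta4_mat :: "nat \<Rightarrow> (nat \<Rightarrow> nat \<Rightarrow> 'a::comm_ring_1) \<Rightarrow> (nat \<Rightarrow> nat \<Rightarrow> 'a) \<Rightarrow> (nat \<Rightarrow> nat \<Rightarrow> 'a)" where
  "delta4_mat q D3 Iota = mat_mul (q - 1) D3 Iota"

definition delta3 :: "nat \<Rightarrow> nat \<Rightarrow> (nat \<Rightarrow> nat \<Rightarrow> 'a::comm_ring_1) \<Rightarrow> ((nat \<Rightarrow> 'a) \<Rightarrow> (nat \<Rightarrow> 'a) \<Rightarrow> (nat \<Rightarrow> 'a))
     \<Rightarrow> (nat \<Rightarrow> 'a) \<Rightarrow> (nat \<Rightarrow> 'a) \<Rightarrow> ((nat \<Rightarrow> 'a) \<Rightarrow> 'a) \<times> (nat \<Rightarrow> 'a)" where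
  "delta3 p q D2 m12 Eta f =
     ((\<lambda>e. if e \<in> vecs (p + 2) then lin_form (q - 1) Eta (m12 e f) else 0),
      mat_app (p + 2) (p + q) D2 f)"

definition delta2 :: "nat \<Rightarrow> nat \<Rightarrow> (nat \<Rightarrow> nat \<Rightarrow> 'a::comm_ring_1) \<Rightarrow> ((nat \<Rightarrow> 'a) \<Rightarrow> (nat \<Rightarrow> 'a) \<Rightarrow> (nat \<Rightarrow> 'a))
     \<Rightarrow> (nat \<Rightarrow> 'a) \<Rightarrow> ((nat \<Rightarrow> 'a) \<Rightarrow> 'a) \<times> (nat \<Rightarrow> 'a) \<Rightarrow> ((nat \<Rightarrow> 'a) \<Rightarrow> 'a)" where
  "delta2 p q D2 m12 Eta x =
     (\<lambda>f. if f \<in> vecs (p + q)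
          then fst x (mat_app (p + 2) (p + q) D2 f) + lin_form (q - 1) Eta (m12 (snd x) f) else 0)"

definition delta1 :: "nat \<Rightarrow> nat \<Rightarrow> (nat \<Rightarrow> nat \<Rightarrow> 'a::comm_ring_1) \<Rightarrow> (nat \<Rightarrow> nat \<Rightarrow> 'a)
     \<Rightarrow> ((nat \<Rightarrow> 'a) \<Rightarrow> 'a) \<Rightarrow> ((nat \<Rightarrow> 'a) \<Rightarrow> 'a)" where
  "delta1 p q D3 Iota \<psi> = (\<lambda>c. if c \<in> vecs (q - 2) then \<psi> (delta4 p q D3 Iota c) else 0)"

text \<open>B: 0 -> C -> A_2 -> Hom(A_1,L) (+) A_1 -> Hom(A_2,L) -> Hom(C,L) is acyclic:
  exact at C, A_2, Hom(A_1,L) (+) A_1 and Hom(A_2,L) (homology vanishes in positions >= 1).\<close>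
definition B_acyclic :: "nat \<Rightarrow> nat \<Rightarrow> (nat \<Rightarrow> nat \<Rightarrow> 'a::comm_ring_1) \<Rightarrow> (nat \<Rightarrow> nat \<Rightarrow> 'a)
     \<Rightarrow> ((nat \<Rightarrow> 'a) \<Rightarrow> (nat \<Rightarrow> 'a) \<Rightarrow> (nat \<Rightarrow> 'a)) \<Rightarrow> (nat \<Rightarrow> nat \<Rightarrow> 'a) \<Rightarrow> (nat \<Rightarrow> 'a) \<Rightarrow> bool" where
  "B_acyclic p q D2 D3 m12 Iota Eta \<longleftrightarrow>
     {c \<in> vecs (q - 2). delta4 p q D3 Iota c = (\<lambda>_. 0)} = {\<lambda>_. 0} \<and>
     {f \<in> vecs (p + q). delta3 p q D2 m12 Eta f = ((\<lambda>_. 0), (\<lambda>_. 0))} = delta4 p q D3 Iota ` vecs (q - 2) \<and>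
     {x \<in> lin_fun (p + 2) \<times> vecs (p + 2). delta2 p q D2 m12 Eta x = (\<lambda>_. 0)} = delta3 p q D2 m12 Eta ` vecs (p + q) \<and>
     {\<psi> \<in> lin_fun (p + q). delta1 p q D3 Iota \<psi> = (\<lambda>_. 0)} = delta2 p q D2 m12 Eta ` (lin_fun (p + 2) \<times> vecs (p + 2))"

end

theory Submission
  imports Defs "Jordan_Normal_Form.Determinant"
begin

(* Write I = im d1 and J for the ideal of maximal minors of delta4 = d3 o iota. Everything rests on
   one consequence of grade J >= 4: if s eta lies in the image of d3^*, then s lies in I. Indeed,
   Cramer's rule for the maximal minors of delta4 together with the splitting A3 = C + L gives
   J s <= I; comparing a free resolution of R/J, whose dual is exact in degrees < 4, with the
   resolution A of R/I then forces s into I. Granting this, exactness of B is linear algebra: the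
   matrix T of (e, f) |-> eta(e f) satisfies T d3 = d1 (x) eta and d2^T T + T^T d2 = 0 by the two
   Leibniz rules. Finally, if Ext^4(R/J, R) vanishes as well, the same comparison applied to the
   exact complex B makes delta4^* surjective, so delta4 has a left inverse and J = R; otherwise
   grade J = 4. *)

definition mat_vec :: "nat \<Rightarrow> (nat \<Rightarrow> nat \<Rightarrow> 'a::comm_ring_1) \<Rightarrow> (nat \<Rightarrow> 'a) \<Rightarrow> nat \<Rightarrow> 'a" where
  "mat_vec m M v = (\<lambda>i. \<Sum>j<m. M i j * v j)"

definition vec_mat :: "nat \<Rightarrow> (nat \<Rightarrow> 'a::comm_ring_1) \<Rightarrow> (nat \<Rightarrow> nat \<Rightarrow> 'a) \<Rightarrow> nat \<Rightarrow> 'a" where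
  "vec_mat n v M = (\<lambda>j. \<Sum>i<n. v i * M i j)"

definition trunc_vec :: "nat \<Rightarrow> (nat \<Rightarrow> 'a::zero) \<Rightarrow> nat \<Rightarrow> 'a" where
  "trunc_vec m v = (\<lambda>i. if i < m then v i else 0)"

definition unit_vec :: "nat \<Rightarrow> nat \<Rightarrow> 'a::comm_ring_1" where
  "unit_vec a = (\<lambda>i. if i = a then 1 else 0)"

lemma trunc_vec_in_vecs [simp]: "trunc_vec m v \<in> vecs m"
  by (simp add: trunc_vec_def vecs_def)

lemma trunc_vec_id: "v \<in> vecs m \<Longrightarrow> trunc_vec m v = v"
  by (auto simp: trunc_vec_def vecs_def)

lemma unit_vec_in_vecs_iff [simp]: "unit_vec a \<in> vecs n \<longleftrightarrow> a < n"
  unfolding unit_vec_def vecs_def by (auto dest: spec[of _ a])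

lemma zero_in_vecs [simp]: "(\<lambda>_. 0) \<in> vecs n"
  by (simp add: vecs_def)

lemma smul_in_vecs [simp]: "u \<in> vecs n \<Longrightarrow> smul s u \<in> vecs n"
  by (simp add: vecs_def smul_def)

lemma add_in_vecs [simp]: "u \<in> vecs n \<Longrightarrow> v \<in> vecs n \<Longrightarrow> (\<lambda>i. u i + v i) \<in> vecs n"
  by (simp add: vecs_def)

lemma mat_app_in_vecs [simp]: "mat_app k m M v \<in> vecs k"
  by (simp add: mat_app_def vecs_def)

lemma vecs_eqI:
  assumes "v \<in> vecs m" "w \<in> vecs m" "\<And>i. i < m \<Longrightarrow> v i = w i"
  shows "v = w"
proof
  fix i show "v i = w i"
    using assms by (cases "i < m") (auto simp: vecs_def)
qed

lemma sum_unit_vec_left: "(\<Sum>x<(n::nat). unit_vec a x * g x) = (if a < n then g a else (0::'a::comm_ring_1))"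
  by (simp add: unit_vec_def if_distrib[of "\<lambda>x. x * _"] sum.delta' cong: if_cong)

lemma sum_unit_vec_right: "(\<Sum>x<(n::nat). g x * unit_vec a x) = (if a < n then g a else (0::'a::comm_ring_1))"
  using sum_unit_vec_left[of a g n] by (simp add: mult.commute)

lemma sum_id_mat_left: "i < n \<Longrightarrow> (\<Sum>j<(n::nat). id_mat i j * v j) = (v i :: 'a::comm_ring_1)"
  by (simp add: id_mat_def if_distrib[of "\<lambda>x. x * _"] sum.delta cong: if_cong)

lemma sum_id_mat_right: "j < n \<Longrightarrow> (\<Sum>i<(n::nat). v i * id_mat i j) = (v j :: 'a::comm_ring_1)"
  by (simp add: id_mat_def if_distrib[of "\<lambda>x. _ * x"] sum.delta' cong: if_cong)

lemma sum_lessThan_add: "(\<Sum>i<a + b. g i) = (\<Sum>i<(a::nat). g i) + (\<Sum>i<b. g (a + i))"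
  by (induct b) (auto simp: ac_simps)

lemma sum_mult_sum_swap:
  "(\<Sum>a<(n::nat). (\<Sum>b<(m::nat). A a b * f b) * B a) = (\<Sum>b<m. f b * (\<Sum>a<n. A a b * (B a::'a::comm_ring_1)))"
  by (simp add: sum_distrib_left sum_distrib_right sum.swap[of _ "{..<n}"] ac_simps)

lemma mat_vec_cong: "(\<And>j. j < m \<Longrightarrow> v j = v' j) \<Longrightarrow> mat_vec m M v = mat_vec m M v'"
  unfolding mat_vec_def by (intro ext sum.cong) auto

lemma mat_vec_trunc_vec [simp]: "mat_vec m M (trunc_vec m v) = mat_vec m M v"
  by (rule mat_vec_cong) (simp add: trunc_vec_def)

lemma mat_vec_add: "mat_vec n M (\<lambda>j. u j + v j) i = mat_vec n M u i + mat_vec n M v i"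
  unfolding mat_vec_def by (simp add: distrib_left sum.distrib)

lemma mat_vec_zero_mat: "(\<And>j. j < n \<Longrightarrow> M i j = 0) \<Longrightarrow> mat_vec n M v i = 0"
  unfolding mat_vec_def by (rule sum.neutral) auto

lemma mat_app_eq_mat_vec: "mat_app k m M v = (\<lambda>r. if r < k then mat_vec m M v r else 0)"
  unfolding mat_app_def mat_vec_def by simp

lemma mat_app_add: "mat_app k m M (\<lambda>i. u i + v i) = (\<lambda>i. mat_app k m M u i + mat_app k m M v i)"
  by (auto simp: mat_app_def distrib_left sum.distrib)

lemma mat_app_diff: "mat_app k m M (\<lambda>i. u i - v i) = (\<lambda>i. mat_app k m M u i - mat_app k m M v i)"
  by (auto simp: mat_app_def right_diff_distrib sum_subtractf)

lemma mat_app_smul: "mat_app k m M (smul s u) = smul s (mat_app k m M u)"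
  by (auto simp: mat_app_def smul_def sum_distrib_left mult.left_commute)

lemma mat_app_unit_vec: "mat_app k m M (unit_vec c) = (\<lambda>r. if r < k \<and> c < m then M r c else 0)"
  by (auto simp: mat_app_def sum_unit_vec_right fun_eq_iff)

lemma vec_mat_cong: "(\<And>i. i < n \<Longrightarrow> v i = v' i) \<Longrightarrow> vec_mat n v M j = vec_mat n v' M j"
  unfolding vec_mat_def by (rule sum.cong) auto

lemma vec_mat_add: "vec_mat n (\<lambda>i. u i + v i) M j = vec_mat n u M j + vec_mat n v M j"
  unfolding vec_mat_def by (simp add: distrib_right sum.distrib)

lemma vec_mat_zero: "(\<And>i. i < n \<Longrightarrow> v i = 0) \<Longrightarrow> vec_mat n v M j = 0"
  unfolding vec_mat_def by (rule sum.neutral) auto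

lemma vec_mat_zero_mat: "(\<And>i. i < n \<Longrightarrow> M i j = 0) \<Longrightarrow> vec_mat n v M j = 0"
  unfolding vec_mat_def by (rule sum.neutral) auto

lemma mat_mul_assoc: "mat_mul b (mat_mul a A B) C = mat_mul a A (mat_mul b B C)"
  unfolding mat_mul_def
  by (intro ext) (simp add: sum_distrib_left sum_distrib_right mult.assoc sum.swap[of _ "{..<b}"])

lemma mat_vec_mat_mul: "mat_vec a A (mat_vec b B v) i = mat_vec b (mat_mul a A B) v i"
  unfolding mat_vec_def mat_mul_def
  by (simp add: sum_distrib_left sum_distrib_right mult.assoc sum.swap[of _ "{..<a}"])

lemma vec_mat_mat_mul: "vec_mat b (vec_mat a v A) B j = vec_mat a v (mat_mul b A B) j"
  unfolding vec_mat_def mat_mul_def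
  by (simp add: sum_distrib_left sum_distrib_right mult.assoc sum.swap[of _ "{..<a}"])

lemma mat_vec_column: "mat_vec a A (\<lambda>t. B t j) i = mat_mul a A B i j"
  unfolding mat_vec_def mat_mul_def by simp

lemma mat_mul_cong: "(\<And>t. t < a \<Longrightarrow> A i t = A' i t) \<Longrightarrow> (\<And>t. t < a \<Longrightarrow> B t j = B' t j) \<Longrightarrow>
   mat_mul a A B i j = mat_mul a A' B' i j"
  unfolding mat_mul_def by (rule sum.cong) auto

lemma mat_mul_diff_left: "mat_mul a (\<lambda>i j. A i j - A' i j) B i j = mat_mul a A B i j - mat_mul a A' B i j"
  unfolding mat_mul_def by (simp add: left_diff_distrib sum_subtractf)

lemma mat_mul_add_right: "mat_mul a A (\<lambda>i j. B i j + B' i j) i j = mat_mul a A B i j + mat_mul a A B' i j"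
  unfolding mat_mul_def by (simp add: distrib_left sum.distrib)

lemma mat_mul_zero_left [simp]: "mat_mul a (\<lambda>_ _. 0) B i j = 0"
  unfolding mat_mul_def by simp

lemma mat_mul_zero_right [simp]: "mat_mul a A (\<lambda>_ _. 0) i j = 0"
  unfolding mat_mul_def by simp

lemma mat_mul_0 [simp]: "mat_mul 0 A B i j = 0"
  unfolding mat_mul_def by simp

lemma mat_mul_1: "mat_mul 1 A B i j = A i 0 * B 0 j"
  unfolding mat_mul_def by simp

lemma mat_mul_tr: "mat_mul m (tr B) (tr A) i j = mat_mul m A B j i"
  unfolding mat_mul_def tr_def by (simp add: mult.commute)

lemma mat_mul_tr_left: "mat_mul m (tr A) B i j = mat_mul m (tr B) A j i"
  unfolding mat_mul_def tr_def by (simp add: mult.commute)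

lemma mat_mul_scalar_id_right: "c < n \<Longrightarrow> mat_mul n M (\<lambda>i c. r * id_mat i c) i c = M i c * r"
  unfolding mat_mul_def using sum_id_mat_right[of c n "\<lambda>l. M i l * r"] by (simp add: ac_simps)

lemma mat_mul_scalar_id_left: "i < n \<Longrightarrow> mat_mul n (\<lambda>i c. r * id_mat i c) M i c = r * M i c"
  unfolding mat_mul_def using sum_id_mat_left[of i n "\<lambda>l. r * M l c"] by (simp add: ac_simps)

section \<open>Exactness in coordinates and the comparison of complexes\<close>

definition exact_at :: "nat \<Rightarrow> nat \<Rightarrow> nat \<Rightarrow> (nat \<Rightarrow> nat \<Rightarrow> 'a::comm_ring_1) \<Rightarrow> (nat \<Rightarrow> nat \<Rightarrow> 'a) \<Rightarrow> bool" where
  "exact_at k m m' M N \<longleftrightarrow> (\<forall>v. (\<forall>i<k. mat_vec m M v i = 0) \<longrightarrow> (\<exists>w. \<forall>i<m. v i = mat_vec m' N w i))"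

lemma exact_at_tr_iff:
  "exact_at k m m' (tr B) (tr A) \<longleftrightarrow>
     (\<forall>v. (\<forall>c<k. vec_mat m v B c = 0) \<longrightarrow> (\<exists>w. \<forall>l<m. v l = vec_mat m' w A l))"
  unfolding exact_at_def mat_vec_def vec_mat_def tr_def by (simp add: mult.commute)

lemma exact_at_of_mker_subset:
  assumes "mker k m M \<subseteq> mimg m m' N"
  shows "exact_at k m m' M N"
  unfolding exact_at_def
proof (intro allI impI)
  fix v assume "\<forall>i<k. mat_vec m M v i = 0"
  then have "trunc_vec m v \<in> mker k m M"
    by (auto simp: mker_def mat_app_eq_mat_vec)
  with assms obtain w where w: "trunc_vec m v = mat_app m m' N w" by (auto simp: mimg_def)
  have "v i = mat_vec m' N w i" if "i < m" for i
    using fun_cong[OF w, of i] that by (simp add: trunc_vec_def mat_app_eq_mat_vec)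
  then show "\<exists>w. \<forall>i<m. v i = mat_vec m' N w i" by blast
qed

lemma mimg_0: "mimg m 0 N = {\<lambda>_. 0}"
proof -
  have "mat_app m 0 N = (\<lambda>_ _. 0)"
    by (simp add: mat_app_def fun_eq_iff)
  then show ?thesis
    unfolding mimg_def by (simp add: image_constant[OF zero_in_vecs])
qed

lemma mat_mul_eq_0_of_mimg_subset:
  assumes "mimg m m' N \<subseteq> mker k m M" and "r < k" and "c < m'"
  shows "mat_mul m M N r c = 0"
proof -
  have "mat_app m m' N (unit_vec c) \<in> mker k m M"
    using assms(1,3) by (auto simp: mimg_def)
  moreover have "mat_app m m' N (unit_vec c) = trunc_vec m (\<lambda>l. N l c)"
    using assms(3) by (auto simp: mat_app_unit_vec trunc_vec_def)
  ultimately have "mat_app k m M (trunc_vec m (\<lambda>l. N l c)) r = 0"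
    by (simp add: mker_def)
  then show ?thesis
    using assms(2) by (simp add: mat_app_eq_mat_vec mat_vec_column)
qed

lemma exact_at_columns:
  assumes "exact_at k m m' M N" and "\<forall>r<k. \<forall>c<C. mat_mul m M X r c = 0"
  shows "\<exists>Y. \<forall>i<m. \<forall>c<C. X i c = mat_mul m' N Y i c"
proof -
  have "\<forall>c\<in>{..<C}. \<exists>w. \<forall>i<m. X i c = mat_vec m' N w i"
    using assms unfolding exact_at_def by (simp add: mat_vec_column)
  then obtain f where f: "\<forall>c\<in>{..<C}. \<forall>i<m. X i c = mat_vec m' N (f c) i" by metis
  show ?thesis
    by (rule exI[of _ "\<lambda>l c. f c l"]) (use f in \<open>auto simp: mat_vec_def mat_mul_def\<close>)
qed

lemma exact_at_tr_rows:
  assumes "exact_at k m m' (tr B) (tr A)" and "\<forall>r<R. \<forall>c<k. mat_mul m X B r c = 0"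
  shows "\<exists>H. \<forall>r<R. \<forall>l<m. X r l = mat_mul m' H A r l"
proof -
  have "\<forall>c<k. \<forall>r<R. mat_mul m (tr B) (tr X) c r = 0"
    using assms(2) by (simp add: mat_mul_tr)
  then obtain Y where "\<forall>l<m. \<forall>r<R. tr X l r = mat_mul m' (tr A) Y l r"
    using exact_at_columns[OF assms(1)] by blast
  then have "\<forall>r<R. \<forall>l<m. X r l = mat_mul m' (tr Y) A r l"
    using mat_mul_tr[of m' A "tr Y"] by (simp add: tr_def)
  then show ?thesis by blast
qed

text \<open>The two steps of the comparison of a resolution with an exact complex: lifting a
  morphism forward along the exact complex, and extending a homotopy backward along the
  dual-exact resolution.\<close>

lemma mat_mul_chain_zero:
  assumes E: "\<forall>i<a0. \<forall>c<b1. mat_mul a1 P f i c = mat_mul b0 g D i c"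
    and DD: "\<forall>r<b0. \<forall>c<b2. mat_mul b1 D D' r c = 0"
    and i: "i < a0" and c: "c < b2"
  shows "mat_mul a1 P (mat_mul b1 f D') i c = 0"
proof -
  have "mat_mul a1 P (mat_mul b1 f D') i c = mat_mul b1 (mat_mul a1 P f) D' i c"
    by (simp add: mat_mul_assoc)
  also have "\<dots> = mat_mul b1 (mat_mul b0 g D) D' i c"
    by (rule mat_mul_cong) (use E i in auto)
  also have "\<dots> = mat_mul b0 g (mat_mul b1 D D') i c"
    by (simp add: mat_mul_assoc)
  also have "\<dots> = mat_mul b0 g (\<lambda>_ _. 0) i c"
    by (rule mat_mul_cong) (use DD c in auto)
  finally show ?thesis by simp
qed

lemma lift_forward:
  assumes E: "\<forall>i<a0. \<forall>c<b1. mat_mul a1 P f i c = mat_mul b0 g D i c"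
    and DD: "\<forall>r<b0. \<forall>c<b2. mat_mul b1 D D' r c = 0"
    and X: "exact_at a0 a1 a2 P P'"
  shows "\<exists>f'. \<forall>i<a1. \<forall>c<b2. mat_mul a2 P' f' i c = mat_mul b1 f D' i c"
proof -
  obtain f' where "\<forall>i<a1. \<forall>c<b2. mat_mul b1 f D' i c = mat_mul a2 P' f' i c"
    using exact_at_columns[OF X] mat_mul_chain_zero[OF E DD] by blast
  then show ?thesis by (intro exI[of _ f']) simp
qed

lemma lift_backward:
  assumes A: "\<forall>i<a0. \<forall>c<b1. mat_mul a1 P f i c = mat_mul b0 g D i c"
    and B: "\<forall>i<a1. \<forall>c<b1. f i c = mat_mul a2 P' h i c + mat_mul b0 h' D i c"
    and C: "\<forall>i<a0. \<forall>c<a2. mat_mul a1 P P' i c = 0"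
    and R: "exact_at b1 b0 bm (tr D) (tr D0)"
  shows "\<exists>h''. \<forall>i<a0. \<forall>c<b0. g i c = mat_mul a1 P h' i c + mat_mul bm h'' D0 i c"
proof -
  let ?Z = "\<lambda>i c. g i c - mat_mul a1 P h' i c"
  have "\<forall>i<a0. \<forall>c<b1. mat_mul b0 ?Z D i c = 0"
  proof (intro allI impI)
    fix i c assume i: "i < a0" and c: "c < b1"
    have "mat_mul a1 P f i c = mat_mul a1 P (\<lambda>i c. mat_mul a2 P' h i c + mat_mul b0 h' D i c) i c"
      by (rule mat_mul_cong) (use B c in auto)
    also have "\<dots> = mat_mul a2 (mat_mul a1 P P') h i c + mat_mul a1 P (mat_mul b0 h' D) i c"
      by (simp add: mat_mul_add_right mat_mul_assoc)
    also have "mat_mul a2 (mat_mul a1 P P') h i c = mat_mul a2 (\<lambda>_ _. 0) h i c"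
      by (rule mat_mul_cong) (use C i in auto)
    finally have "mat_mul b0 g D i c = mat_mul b0 (mat_mul a1 P h') D i c"
      using A i c by (simp add: mat_mul_assoc)
    then show "mat_mul b0 ?Z D i c = 0" by (simp add: mat_mul_diff_left)
  qed
  from exact_at_tr_rows[OF R this] obtain H where "\<forall>r<a0. \<forall>l<b0. ?Z r l = mat_mul bm H D0 r l"
    by blast
  then show ?thesis by (intro exI[of _ H]) (simp add: algebra_simps)
qed

section \<open>Generated ideals and ideals of maximal minors\<close>

lemma ideal_gen_zero: "0 \<in> ideal_gen S"
  unfolding ideal_gen_def by (rule CollectI, rule exI[of _ "{}"]) simp

lemma ideal_gen_base: "s \<in> S \<Longrightarrow> s \<in> ideal_gen S"
  unfolding ideal_gen_def by (rule CollectI, rule exI[of _ "{s}"], rule exI[of _ "\<lambda>_. 1"]) simp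

lemma ideal_gen_add:
  assumes x: "x \<in> ideal_gen S" and y: "y \<in> ideal_gen S"
  shows "x + y \<in> ideal_gen S"
proof -
  obtain T1 c1 where T1: "finite T1" "T1 \<subseteq> S" "x = (\<Sum>s\<in>T1. c1 s * s)" using x by (auto simp: ideal_gen_def)
  obtain T2 c2 where T2: "finite T2" "T2 \<subseteq> S" "y = (\<Sum>s\<in>T2. c2 s * s)" using y by (auto simp: ideal_gen_def)
  define c where "c = (\<lambda>s. (if s \<in> T1 then c1 s else 0) + (if s \<in> T2 then c2 s else 0))"
  have "(\<Sum>s\<in>T1 \<union> T2. c s * s) = (\<Sum>s\<in>T1 \<union> T2. (if s \<in> T1 then c1 s * s else 0)) + (\<Sum>s\<in>T1 \<union> T2. (if s \<in> T2 then c2 s * s else 0))"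
    unfolding c_def by (simp add: distrib_right sum.distrib if_distrib[of "\<lambda>x. x * _"] cong: if_cong)
  also have "\<dots> = x + y"
    using sum.inter_restrict[of "T1 \<union> T2" "\<lambda>s. c1 s * s" T1] sum.inter_restrict[of "T1 \<union> T2" "\<lambda>s. c2 s * s" T2]
      T1 T2 by (simp add: Int_absorb1)
  finally have "x + y = (\<Sum>s\<in>T1 \<union> T2. c s * s)" ..
  moreover have "finite (T1 \<union> T2)" "T1 \<union> T2 \<subseteq> S" using T1 T2 by auto
  ultimately show ?thesis unfolding ideal_gen_def by blast
qed

lemma ideal_gen_mult:
  assumes x: "x \<in> ideal_gen S"
  shows "a * x \<in> ideal_gen S"
proof -
  obtain T c where T: "finite T" "T \<subseteq> S" "x = (\<Sum>s\<in>T. c s * s)" using x by (auto simp: ideal_gen_def)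
  have "a * x = (\<Sum>s\<in>T. (a * c s) * s)" using T(3) by (simp add: sum_distrib_left mult.assoc)
  then show ?thesis unfolding ideal_gen_def
    by (intro CollectI exI[of _ T] exI[of _ "\<lambda>s. a * c s"]) (use T in auto)
qed

lemma ideal_gen_sum:
  assumes "finite I" and "\<And>i. i \<in> I \<Longrightarrow> f i \<in> ideal_gen S"
  shows "sum f I \<in> ideal_gen S"
  using assms by (induction I rule: finite_induct) (auto intro: ideal_gen_zero ideal_gen_add)

lemma ideal_gen_induct [consumes 1, case_names zero add base]:
  assumes x: "x \<in> ideal_gen S" and zero: "P 0"
    and add: "\<And>a b. P a \<Longrightarrow> P b \<Longrightarrow> P (a + b)"
    and base: "\<And>c s. s \<in> S \<Longrightarrow> P (c * s)"
  shows "P x"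
proof -
  obtain T c where T: "finite T" "T \<subseteq> S" "x = (\<Sum>s\<in>T. c s * s)" using x by (auto simp: ideal_gen_def)
  have "P (\<Sum>s\<in>T. c s * s)" using T(1,2)
    by (induction T rule: finite_induct) (auto intro: zero add base)
  then show ?thesis using T(3) by simp
qed

lemma is_ideal_ideal_gen: "is_ideal (ideal_gen S)"
  unfolding is_ideal_def by (auto intro: ideal_gen_zero ideal_gen_add ideal_gen_mult)

lemma ideal_gen_eq_UNIV: "1 \<in> ideal_gen S \<Longrightarrow> ideal_gen S = UNIV"
  using ideal_gen_mult[of 1 S] by auto

lemma det_nat_eq_det: "det_nat k N = det (mat k k (\<lambda>(i,j). N i j))"
  unfolding det_def det_nat_def
  by (auto simp: atLeast0LessThan permutes_in_image intro!: sum.cong arg_cong2[where f = "(*)"] prod.cong)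

lemma det_nat_cong:
  assumes "\<And>i j. i < k \<Longrightarrow> j < k \<Longrightarrow> N i j = N' i j"
  shows "det_nat k N = det_nat k N'"
  unfolding det_nat_def
proof (intro sum.cong refl arg_cong2[where f = "(*)"] prod.cong)
  fix \<sigma> i assume "\<sigma> \<in> {\<sigma>. \<sigma> permutes {..<k}}" "i \<in> {..<k}"
  then show "N i (\<sigma> i) = N' i (\<sigma> i)" using assms permutes_in_image by fastforce
qed

lemma det_nat_id_mat: "det_nat k id_mat = (1::'a::comm_ring_1)"
proof -
  have "mat k k (\<lambda>(i,j). id_mat i j) = (1\<^sub>m k :: 'a mat)"
    by (rule eq_matI) (auto simp: id_mat_def)
  then show ?thesis by (simp add: det_nat_eq_det)
qed

lemma det_nat_mat_mul:
  "det_nat k (mat_mul m A M) =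
     (\<Sum>g\<in>PiE {..<k} (\<lambda>_. {..<m}). (\<Prod>i<k. A i (g i)) * det_nat k (\<lambda>i. M (g i)))"
proof -
  let ?P = "{\<sigma>. \<sigma> permutes {..<k}}" and ?G = "PiE {..<k} (\<lambda>_. {..<m})"
  have "det_nat k (mat_mul m A M) = (\<Sum>\<sigma>\<in>?P. of_int (sign \<sigma>) * (\<Sum>g\<in>?G. \<Prod>i<k. A i (g i) * M (g i) (\<sigma> i)))"
    unfolding det_nat_def mat_mul_def by (subst prod_sum_PiE) auto
  also have "\<dots> = (\<Sum>g\<in>?G. \<Sum>\<sigma>\<in>?P. (\<Prod>i<k. A i (g i)) * (of_int (sign \<sigma>) * (\<Prod>i<k. M (g i) (\<sigma> i))))"
    by (subst sum.swap) (simp add: sum_distrib_left prod.distrib ac_simps)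
  also have "\<dots> = (\<Sum>g\<in>?G. (\<Prod>i<k. A i (g i)) * det_nat k (\<lambda>i. M (g i)))"
    by (simp add: det_nat_def sum_distrib_left)
  finally show ?thesis .
qed

lemma det_nat_permute_rows:
  assumes "\<pi> permutes {..<k}"
  shows "det_nat k (\<lambda>i. N (\<pi> i)) = of_int (sign \<pi>) * det_nat k N"
proof -
  define B where "B = mat k k (\<lambda>(i,j). N i j)"
  have "det_nat k (\<lambda>i. N (\<pi> i)) = det (mat k k (\<lambda>(i,j). B $$ (\<pi> i, j)))"
    unfolding det_nat_eq_det using permutes_in_image[OF assms]
    by (intro arg_cong[of _ _ det] eq_matI) (auto simp: B_def)
  also have "\<dots> = of_int (sign \<pi>) * det B"
    by (rule det_permute_rows) (use assms in \<open>auto simp: B_def atLeast0LessThan\<close>)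
  finally show ?thesis by (simp add: B_def det_nat_eq_det)
qed

lemma strict_mono_enumeration:
  assumes "finite (S :: nat set)"
  obtains s where "strict_mono_on {..<card S} s" and "s ` {..<card S} = S"
proof
  let ?xs = "sorted_list_of_set S"
  show "strict_mono_on {..<card S} (\<lambda>i. ?xs ! i)"
    unfolding strict_mono_on_def by (auto intro: sorted_wrt_nth_less simp: strict_sorted_list_of_set)
  show "(\<lambda>i. ?xs ! i) ` {..<card S} = S"
    using assms set_sorted_list_of_set[OF assms] by (auto simp: set_conv_nth)
qed

lemma det_nat_rows_in_minor_ideal:
  assumes g: "g \<in> PiE {..<k} (\<lambda>_. {..<m})"
  shows "det_nat k (\<lambda>i. M (g i)) \<in> minor_ideal m k M"
proof (cases "inj_on g {..<k}")
  case False
  then obtain a b where ab: "a < k" "b < k" "a \<noteq> b" "g a = g b" unfolding inj_on_def by auto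
  have "det (mat k k (\<lambda>(i,j). M (g i) j)) = 0"
    by (rule det_identical_rows[of _ k a b]) (use ab in auto)
  then show ?thesis by (simp add: det_nat_eq_det minor_ideal_def ideal_gen_zero)
next
  case True
  then have "card (g ` {..<k}) = k" by (simp add: card_image)
  with strict_mono_enumeration[of "g ` {..<k}"] obtain s
    where smono: "strict_mono_on {..<k} s" and simg: "s ` {..<k} = g ` {..<k}" by auto
  have "s ` {..<k} \<subseteq> {..<m}" using simg g by (auto simp: PiE_def Pi_def)
  then have "det_nat k (\<lambda>i. M (s i)) \<in> max_minors m k M"
    using smono unfolding max_minors_def by blast
  then have minor: "det_nat k (\<lambda>i. M (s i)) \<in> minor_ideal m k M"
    by (simp add: minor_ideal_def ideal_gen_base)
  \<comment> \<open>the rows selected by \<open>g\<close> are those selected by \<open>s\<close>, permuted by \<open>\<pi>\<close>\<close>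
  define \<pi> where "\<pi> = (\<lambda>i. if i < k then inv_into {..<k} s (g i) else i)"
  have "bij_betw (inv_into {..<k} s \<circ> g) {..<k} {..<k}"
  proof (rule bij_betw_trans)
    show "bij_betw g {..<k} (s ` {..<k})" using True simg by (simp add: bij_betw_def)
    show "bij_betw (inv_into {..<k} s) (s ` {..<k}) {..<k}"
      using strict_mono_on_imp_inj_on[OF smono] by (rule bij_betw_inv_into[OF inj_on_imp_bij_betw])
  qed
  then have "bij_betw \<pi> {..<k} {..<k}"
    by (rule bij_betw_cong[THEN iffD1, rotated]) (simp add: \<pi>_def)
  then have perm: "\<pi> permutes {..<k}"
    by (rule bij_imp_permutes) (simp add: \<pi>_def)
  have "s (\<pi> i) = g i" if "i < k" for i
    using that simg by (simp add: \<pi>_def f_inv_into_f)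
  then have "det_nat k (\<lambda>i. M (g i)) = det_nat k (\<lambda>i. M (s (\<pi> i)))"
    by (intro det_nat_cong) simp
  also have "\<dots> = of_int (sign \<pi>) * det_nat k (\<lambda>i. M (s i))"
    by (rule det_nat_permute_rows[OF perm])
  finally show ?thesis
    using minor unfolding minor_ideal_def by (simp add: ideal_gen_mult)
qed

lemma one_in_minor_ideal_if_left_inverse:
  assumes "\<And>i j. i < k \<Longrightarrow> j < k \<Longrightarrow> mat_mul m A M i j = id_mat i j"
  shows "1 \<in> minor_ideal m k M"
proof -
  have "(1::'a) = det_nat k (mat_mul m A M)"
    using det_nat_cong[of k "mat_mul m A M" id_mat] assms det_nat_id_mat by simp
  also have "\<dots> \<in> minor_ideal m k M"
    unfolding det_nat_mat_mul minor_ideal_def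
    by (rule ideal_gen_sum)
       (auto intro!: ideal_gen_mult det_nat_rows_in_minor_ideal[unfolded minor_ideal_def] simp: finite_PiE)
  finally show ?thesis .
qed

lemma minor_mult_in_row_space:
  assumes sm: "\<sigma> ` {..<k} \<subseteq> {..<m}"
  shows "\<exists>z. \<forall>j<k. det_nat k (\<lambda>i j. M (\<sigma> i) j) * u j = vec_mat m z M j"
proof -
  define A where "A = mat k k (\<lambda>(i,j). M (\<sigma> i) j)"
  have Ac: "A \<in> carrier_mat k k" by (simp add: A_def)
  define ad where "ad = adj_mat A"
  have adc: "ad \<in> carrier_mat k k" using adj_mat(1)[OF Ac] by (simp add: ad_def)
  have adA: "(\<Sum>i<k. ad $$ (a,i) * M (\<sigma> i) j) = det A * id_mat a j" if "a < k" "j < k" for a j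
  proof -
    have "(\<Sum>i<k. ad $$ (a,i) * M (\<sigma> i) j) = (ad * A) $$ (a,j)"
      using that adc by (simp add: scalar_prod_def A_def atLeast0LessThan)
    also have "\<dots> = det A * id_mat a j"
      using that adj_mat(3)[OF Ac] by (simp add: ad_def id_mat_def)
    finally show ?thesis .
  qed
  define z' where "z' = (\<lambda>i. \<Sum>a<k. u a * ad $$ (a,i))"
  define z where "z = (\<lambda>b. \<Sum>i<k. if \<sigma> i = b then z' i else 0)"
  have "vec_mat m z M j = det A * u j" if j: "j < k" for j
  proof -
    have "vec_mat m z M j = (\<Sum>i<k. \<Sum>b<m. if \<sigma> i = b then z' i * M b j else 0)"
      unfolding vec_mat_def z_def
      by (subst sum.swap) (simp add: sum_distrib_right if_distrib[of "\<lambda>x. x * _"] cong: if_cong)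
    also have "\<dots> = (\<Sum>i<k. z' i * M (\<sigma> i) j)"
      using sm by (intro sum.cong refl) (auto simp: sum.delta)
    also have "\<dots> = (\<Sum>i<k. \<Sum>a<k. u a * (ad $$ (a,i) * M (\<sigma> i) j))"
      unfolding z'_def by (simp add: sum_distrib_right mult.assoc)
    also have "\<dots> = (\<Sum>a<k. u a * (\<Sum>i<k. ad $$ (a,i) * M (\<sigma> i) j))"
      by (subst sum.swap) (simp add: sum_distrib_left)
    also have "\<dots> = (\<Sum>a<k. u a * (det A * id_mat a j))"
      using j by (intro sum.cong refl) (simp add: adA)
    also have "\<dots> = (\<Sum>a<k. (det A * u a) * id_mat a j)"
      by (simp add: ac_simps)
    finally show ?thesis using sum_id_mat_right[OF j] by simp
  qed
  then show ?thesis
    by (intro exI[of _ z]) (simp add: det_nat_eq_det A_def)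
qed

section \<open>Free resolutions over a Noetherian ring\<close>

definition is_submodule :: "nat \<Rightarrow> (nat \<Rightarrow> 'a::comm_ring_1) set \<Rightarrow> bool" where
  "is_submodule n N \<longleftrightarrow> N \<subseteq> vecs n \<and> (\<lambda>_. 0) \<in> N \<and>
     (\<forall>u\<in>N. \<forall>v\<in>N. (\<lambda>i. u i + v i) \<in> N) \<and> (\<forall>s. \<forall>u\<in>N. smul s u \<in> N)"

lemma submodule_lincomb:
  assumes N: "is_submodule n N" and f: "\<And>i. i < (k::nat) \<Longrightarrow> f i \<in> N"
  shows "(\<lambda>r. \<Sum>i<k. c i * f i r) \<in> N"
  using f
proof (induction k)
  case 0 then show ?case using N by (simp add: is_submodule_def)
next
  case (Suc k)
  have "smul (c k) (f k) \<in> N" using N Suc.prems by (simp add: is_submodule_def)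
  moreover have "(\<lambda>r. \<Sum>i<Suc k. c i * f i r) = (\<lambda>r. (\<Sum>i<k. c i * f i r) + smul (c k) (f k) r)"
    by (simp add: smul_def)
  ultimately show ?case using Suc N by (simp add: is_submodule_def)
qed

lemma submodule_diff:
  assumes N: "is_submodule n N" and "u \<in> N" and "v \<in> N"
  shows "(\<lambda>i. u i - v i) \<in> N"
proof -
  have "(\<lambda>i. u i + smul (-1) v i) \<in> N" using assms by (simp add: is_submodule_def)
  then show ?thesis by (simp add: smul_def)
qed

lemma submodule_mker: "is_submodule m (mker k m M)"
  unfolding is_submodule_def mker_def
  by (auto simp: smul_def mat_app_def fun_eq_iff distrib_left sum.distrib mult.left_commute
      sum_distrib_left[symmetric] vecs_def)

lemma submodule_of_ideal: "is_ideal J \<Longrightarrow> is_submodule 1 {v \<in> vecs 1. v 0 \<in> J}"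
  unfolding is_submodule_def is_ideal_def by (auto simp: smul_def vecs_def)

lemma ideal_last_coordinates:
  assumes N: "is_submodule (Suc n) N"
  shows "is_ideal {v n | v. v \<in> N}"
  unfolding is_ideal_def
proof (intro conjI ballI allI)
  show "0 \<in> {v n | v. v \<in> N}" using N by (force simp: is_submodule_def)
  fix x y assume "x \<in> {v n | v. v \<in> N}" "y \<in> {v n | v. v \<in> N}"
  then obtain u v where "u \<in> N" "v \<in> N" "x = u n" "y = v n" by auto
  then show "x + y \<in> {v n | v. v \<in> N}"
    using N unfolding is_submodule_def by (intro CollectI exI[of _ "\<lambda>i. u i + v i"]) auto
next
  fix a x assume "x \<in> {v n | v. v \<in> N}"
  then obtain u where "u \<in> N" "x = u n" by auto
  then show "a * x \<in> {v n | v. v \<in> N}"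
    using N unfolding is_submodule_def by (intro CollectI exI[of _ "smul a u"]) (auto simp: smul_def)
qed

lemma submodule_last_coordinate_zero:
  assumes N: "is_submodule (Suc n) N"
  shows "is_submodule n {v \<in> N. v n = 0}"
proof -
  have "v \<in> vecs n" if v: "v \<in> N" "v n = 0" for v
  proof -
    have "v \<in> vecs (Suc n)" using v N by (auto simp: is_submodule_def)
    moreover have "i = n \<or> Suc n \<le> i" if "n \<le> i" for i using that by arith
    ultimately show ?thesis using v(2) unfolding vecs_def by blast
  qed
  then show ?thesis
    using N unfolding is_submodule_def by (auto simp: smul_def)
qed

lemma ideal_gen_set_sum_nth:
  assumes "x \<in> ideal_gen (set xs)"
  shows "\<exists>d. x = (\<Sum>i<length xs. d i * xs ! i)"
  using assms
proof (induction rule: ideal_gen_induct)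
  case zero
  show ?case by (intro exI[of _ "\<lambda>_. 0"]) simp
next
  case (add a b)
  then obtain d d' where "a = (\<Sum>i<length xs. d i * xs ! i)" "b = (\<Sum>i<length xs. d' i * xs ! i)" by blast
  then show ?case by (intro exI[of _ "\<lambda>i. d i + d' i"]) (simp add: distrib_right sum.distrib)
next
  case (base c s)
  then obtain j where j: "j < length xs" "s = xs ! j" by (auto simp: in_set_conv_nth)
  have "c * s = (\<Sum>i<length xs. (if i = j then c else 0) * xs ! i)"
    using j by (simp add: if_distrib[of "\<lambda>x. x * _"] sum.delta' cong: if_cong)
  then show ?case by auto
qed

lemma mat_app_append_columns:
  assumes "\<And>i. i < k \<Longrightarrow> W i \<in> vecs (Suc n)"
  shows "mat_app (Suc n) (m' + k) (\<lambda>r c. if c < m' then (if r < n then X' r c else 0) else W (c - m') r) z =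
    (\<lambda>r. mat_app n m' X' z r + (\<Sum>i<k. z (m' + i) * W i r))"
proof
  fix r
  show "mat_app (Suc n) (m' + k) (\<lambda>r c. if c < m' then (if r < n then X' r c else 0) else W (c - m') r) z r =
      mat_app n m' X' z r + (\<Sum>i<k. z (m' + i) * W i r)"
  proof (cases "r < Suc n")
    case True
    then show ?thesis
      by (auto simp: mat_app_def sum_lessThan_add mult.commute intro!: sum.neutral)
  next
    case False
    then have "W i r = 0" if "i < k" for i using assms[OF that] by (simp add: vecs_def)
    then show ?thesis using False by (simp add: mat_app_def)
  qed
qed

lemma mimg_add_generators:
  assumes N: "is_submodule (Suc n) N"
    and N': "{v \<in> N. v n = 0} = mimg n m' X'"
    and W: "\<And>i. i < k \<Longrightarrow> W i \<in> N"
    and gen: "\<And>v. v \<in> N \<Longrightarrow> \<exists>d. v n = (\<Sum>i<k. d i * W i n)"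
  shows "N = mimg (Suc n) (m' + k) (\<lambda>r c. if c < m' then (if r < n then X' r c else 0) else W (c - m') r)"
    (is "N = mimg _ _ ?X")
proof -
  have split: "mat_app (Suc n) (m' + k) ?X z = (\<lambda>r. mat_app n m' X' z r + (\<Sum>i<k. z (m' + i) * W i r))" for z
    by (rule mat_app_append_columns) (use W N in \<open>auto simp: is_submodule_def\<close>)
  show ?thesis
  proof
    show "mimg (Suc n) (m' + k) ?X \<subseteq> N"
    proof
      fix y assume "y \<in> mimg (Suc n) (m' + k) ?X"
      then obtain z where y: "y = mat_app (Suc n) (m' + k) ?X z" by (auto simp: mimg_def)
      have "mat_app n m' X' (trunc_vec m' z) \<in> N" using N' by (auto simp: mimg_def)
      then have "mat_app n m' X' z \<in> N" by (simp only: mat_app_eq_mat_vec mat_vec_trunc_vec)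
      moreover have "(\<lambda>r. \<Sum>i<k. z (m' + i) * W i r) \<in> N" by (rule submodule_lincomb[OF N W])
      ultimately show "y \<in> N" unfolding y split using N by (simp add: is_submodule_def)
    qed
  next
    show "N \<subseteq> mimg (Suc n) (m' + k) ?X"
    proof
      fix v assume v: "v \<in> N"
      obtain d where d: "v n = (\<Sum>i<k. d i * W i n)" using gen[OF v] by blast
      define u where "u = (\<lambda>r. v r - (\<Sum>i<k. d i * W i r))"
      have "u \<in> N" unfolding u_def by (rule submodule_diff[OF N v submodule_lincomb[OF N W]])
      moreover have "u n = 0" using d by (simp add: u_def)
      ultimately obtain a where a: "u = mat_app n m' X' a" using N' by (auto simp: mimg_def)
      define z where "z = (\<lambda>c. if c < m' then a c else if c < m' + k then d (c - m') else 0)"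
      have "v r = mat_app (Suc n) (m' + k) ?X z r" if "r < Suc n" for r
      proof -
        have "mat_app n m' X' z r = u r"
          unfolding a mat_app_def by (simp add: z_def)
        moreover have "(\<Sum>i<k. z (m' + i) * W i r) = (\<Sum>i<k. d i * W i r)"
          by (simp add: z_def)
        ultimately show ?thesis by (simp add: split u_def)
      qed
      moreover have "v \<in> vecs (Suc n)" using v N by (auto simp: is_submodule_def)
      ultimately have "v = mat_app (Suc n) (m' + k) ?X z"
        by (intro vecs_eqI[OF _ mat_app_in_vecs]) auto
      moreover have "z \<in> vecs (m' + k)" by (simp add: z_def vecs_def)
      ultimately show "v \<in> mimg (Suc n) (m' + k) ?X" by (auto simp: mimg_def)
    qed
  qed
qed

lemma submodule_finitely_generated:
  assumes noeth: "noetherian_ring TYPE('a::comm_ring_1)"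
  shows "is_submodule n (N::(nat \<Rightarrow> 'a) set) \<Longrightarrow> \<exists>m X. N = mimg n m X"
proof (induction n arbitrary: N)
  case 0
  then have "N = {\<lambda>_. 0}" by (auto simp: is_submodule_def vecs_def fun_eq_iff)
  then show ?case using mimg_0 by blast
next
  case (Suc n)
  obtain S where S: "finite S" "{v n | v. v \<in> N} = ideal_gen S"
    using noeth ideal_last_coordinates[OF Suc.prems] unfolding noetherian_ring_def by blast
  obtain xs where xs: "set xs = S" using finite_list[OF S(1)] by blast
  have "\<forall>i\<in>{..<length xs}. \<exists>w. w \<in> N \<and> w n = xs ! i"
  proof
    fix i assume "i \<in> {..<length xs}"
    then have "xs ! i \<in> {v n | v. v \<in> N}" unfolding S(2) using xs by (auto intro: ideal_gen_base)
    then show "\<exists>w. w \<in> N \<and> w n = xs ! i" by auto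
  qed
  then obtain W where W: "\<And>i. i < length xs \<Longrightarrow> W i \<in> N \<and> W i n = xs ! i" by (metis lessThan_iff)
  obtain m' X' where "{v \<in> N. v n = 0} = mimg n m' X'"
    using Suc.IH[OF submodule_last_coordinate_zero[OF Suc.prems]] by blast
  moreover have "\<exists>d. v n = (\<Sum>i<length xs. d i * W i n)" if "v \<in> N" for v
    using ideal_gen_set_sum_nth[of "v n" xs] that S xs W by auto
  ultimately have "N = mimg (Suc n) (m' + length xs)
      (\<lambda>r c. if c < m' then (if r < n then X' r c else 0) else W (c - m') r)"
    using mimg_add_generators[OF Suc.prems] W by blast
  then show ?case by blast
qed

definition syzygy_step :: "nat \<times> nat \<times> (nat \<Rightarrow> nat \<Rightarrow> 'a::comm_ring_1) \<Rightarrow> nat \<times> nat \<times> (nat \<Rightarrow> nat \<Rightarrow> 'a)" where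
  "syzygy_step = (\<lambda>(a, b, D). (b, SOME mX. mker a b D = mimg b (fst mX) (snd mX)))"

lemma resolution_exists:
  assumes noeth: "noetherian_ring TYPE('a::comm_ring_1)" and J: "is_ideal (J::'a set)"
  shows "\<exists>n D. free_resolution J n D"
proof -
  obtain m1 X1 where X1: "{v \<in> vecs 1. v 0 \<in> J} = mimg 1 m1 X1"
    using submodule_finitely_generated[OF noeth submodule_of_ideal[OF J]] by blast
  define st where "st i = (syzygy_step ^^ i) (1, m1, X1)" for i
  define n where "n i = fst (st i)" for i
  define D where "D i = snd (snd (st (i - 1)))" for i
  have st: "st i = (n i, n (Suc i), D (Suc i))" for i
    by (simp add: st_def n_def D_def syzygy_step_def split_beta)
  have "mker (n i) (n (Suc i)) (D (Suc i)) = mimg (n (Suc i)) (n (Suc (Suc i))) (D (Suc (Suc i)))" for i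
  proof -
    let ?P = "\<lambda>mX. mker (n i) (n (Suc i)) (D (Suc i)) = mimg (n (Suc i)) (fst mX) (snd mX)"
    have "\<exists>mX. ?P mX"
      using submodule_finitely_generated[OF noeth submodule_mker] by auto
    then have "?P (SOME mX. ?P mX)" by (rule someI_ex)
    moreover have "st (Suc i) = (n (Suc i), SOME mX. ?P mX)"
      using st[of i] by (simp add: st_def syzygy_step_def)
    then have "(SOME mX. ?P mX) = (n (Suc (Suc i)), D (Suc (Suc i)))"
      using st[of "Suc i"] by simp
    ultimately show ?thesis by simp
  qed
  moreover have "n 0 = 1" "mimg 1 (n 1) (D 1) = {v \<in> vecs 1. v 0 \<in> J}"
    using X1 by (simp_all add: n_def D_def st_def syzygy_step_def)
  ultimately have "free_resolution J n D"
    unfolding free_resolution_def by (auto simp: Suc_le_eq dest!: gr0_implies_Suc)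
  then show ?thesis by blast
qed

lemma free_resolution_mat_mul_zero:
  assumes "free_resolution J n D" and "1 \<le> i" and "r < n (i - 1)" and "c < n (Suc i)"
  shows "mat_mul (n i) (D i) (D (Suc i)) r c = 0"
  by (rule mat_mul_eq_0_of_mimg_subset[OF _ assms(3,4)]) (use assms(1,2) in \<open>simp add: free_resolution_def\<close>)

lemma free_resolution_first_entries:
  assumes "free_resolution J n D" and "c < n 1"
  shows "D 1 0 c \<in> J"
proof -
  have "mat_app 1 (n 1) (D 1) (unit_vec c) \<in> mimg 1 (n 1) (D 1)"
    using assms(2) by (auto simp: mimg_def)
  then show ?thesis using assms by (simp add: free_resolution_def mat_app_unit_vec)
qed

lemma exact_at_dual_of_ext_zero:
  assumes "ext_zero J i" and "free_resolution J n D"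
  shows "exact_at (n (Suc i)) (n i) (if i = 0 then 0 else n (i - 1)) (tr (D (Suc i))) (tr (D i))"
proof (rule exact_at_of_mker_subset)
  have "mker (n (Suc i)) (n i) (tr (D (Suc i))) \<subseteq>
      (if i = 0 then {\<lambda>_. 0} else mimg (n i) (n (i - 1)) (tr (D i)))"
    using assms unfolding ext_zero_def by simp
  then show "mker (n (Suc i)) (n i) (tr (D (Suc i))) \<subseteq>
      mimg (n i) (if i = 0 then 0 else n (i - 1)) (tr (D i))"
    by (simp add: mimg_0 split: if_splits)
qed

lemma ext_zero_of_grade_ge:
  assumes "enat k \<le> grade J" and "i < k"
  shows "ext_zero J i"
proof (cases "\<forall>i. ext_zero J i")
  case False
  with assms have "i < (LEAST i. \<not> ext_zero J i)" by (simp add: grade_def)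
  then show ?thesis using not_less_Least by blast
qed simp

lemma grade_eq_if_not_ext_zero: "enat k \<le> grade J \<Longrightarrow> \<not> ext_zero J k \<Longrightarrow> grade J = enat k"
  unfolding grade_def by (auto split: if_splits intro: Least_le antisym)

text \<open>Let \<open>P\<close> be an exact complex
  \<open>0 \<rightarrow> R^m4 \<rightarrow> R^m3 \<rightarrow> R^m2 \<rightarrow> R^m1 \<rightarrow> R^m0\<close>, let \<open>F\<close> (given by \<open>n, D\<close>) be a free
  resolution of \<open>R/J\<close> whose dual is exact in degrees \<open>\<le> 3\<close> (and \<open>4\<close>, unless \<open>m4 = 0\<close>), and let
  \<open>J y \<subseteq> im P1\<close>. Then \<open>1 \<mapsto> y\<close> lifts to a morphism \<open>f : F \<rightarrow> P\<close>, exactness of \<open>F\<^sup>*\<close> builds a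
  null-homotopy \<open>h\<close> of \<open>f\<close> from the top down, and in degree \<open>0\<close> it gives \<open>y \<in> im P1\<close>.\<close>

lemma in_image_by_comparison:
  fixes P1 P2 P3 P4 :: "nat \<Rightarrow> nat \<Rightarrow> 'a::comm_ring_1"
  assumes n0: "n 0 = 1"
    and DD1: "\<forall>r<n 0. \<forall>c<n 2. mat_mul (n 1) (D 1) (D 2) r c = 0"
    and DD2: "\<forall>r<n 1. \<forall>c<n 3. mat_mul (n 2) (D 2) (D 3) r c = 0"
    and DD3: "\<forall>r<n 2. \<forall>c<n 4. mat_mul (n 3) (D 3) (D 4) r c = 0"
    and DD4: "\<forall>r<n 3. \<forall>c<n 5. mat_mul (n 4) (D 4) (D 5) r c = 0"
    and R0: "exact_at (n 1) (n 0) 0 (tr (D 1)) (tr (D 0))"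
    and R1: "exact_at (n 2) (n 1) (n 0) (tr (D 2)) (tr (D 1))"
    and R2: "exact_at (n 3) (n 2) (n 1) (tr (D 3)) (tr (D 2))"
    and R3: "exact_at (n 4) (n 3) (n 2) (tr (D 4)) (tr (D 3))"
    and R4: "0 < m4 \<Longrightarrow> exact_at (n 5) (n 4) (n 3) (tr (D 5)) (tr (D 4))"
    and P12: "\<forall>i<m0. \<forall>c<m2. mat_mul m1 P1 P2 i c = 0"
    and P23: "\<forall>i<m1. \<forall>c<m3. mat_mul m2 P2 P3 i c = 0"
    and P34: "\<forall>i<m2. \<forall>c<m4. mat_mul m3 P3 P4 i c = 0"
    and X1: "exact_at m0 m1 m2 P1 P2" and X2: "exact_at m1 m2 m3 P2 P3" and X3: "exact_at m2 m3 m4 P3 P4"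
    and inj: "\<And>v. \<forall>i<m3. mat_vec m4 P4 v i = 0 \<Longrightarrow> \<forall>i<m4. v i = 0"
    and y: "\<forall>c\<in>{..<n 1}. \<exists>x. \<forall>i<m0. D 1 0 c * y i = mat_vec m1 P1 x i"
  shows "\<exists>x. \<forall>i<m0. y i = mat_vec m1 P1 x i"
proof -
  define f0 where "f0 = (\<lambda>(i::nat) (j::nat). y i)"
  obtain x where "\<forall>c\<in>{..<n 1}. \<forall>i<m0. D 1 0 c * y i = mat_vec m1 P1 (x c) i" using y by metis
  then have E1: "\<forall>i<m0. \<forall>c<n 1. mat_mul m1 P1 (\<lambda>l c. x c l) i c = mat_mul (n 0) f0 (D 1) i c"
    by (simp add: n0 mat_mul_1 f0_def mat_vec_def mat_mul_def mult.commute)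
  obtain f2 where E2: "\<forall>i<m1. \<forall>c<n 2. mat_mul m2 P2 f2 i c = mat_mul (n 1) (\<lambda>l c. x c l) (D 2) i c"
    using lift_forward[OF E1 DD1 X1] by blast
  obtain f3 where E3: "\<forall>i<m2. \<forall>c<n 3. mat_mul m3 P3 f3 i c = mat_mul (n 2) f2 (D 3) i c"
    using lift_forward[OF E2 DD2 X2] by blast
  obtain f4 where E4: "\<forall>i<m3. \<forall>c<n 4. mat_mul m4 P4 f4 i c = mat_mul (n 3) f3 (D 4) i c"
    using lift_forward[OF E3 DD3 X3] by blast
  obtain h4 where B4: "\<forall>i<m4. \<forall>c<n 4. f4 i c = mat_mul 0 (\<lambda>_ _. 0) (\<lambda>_ _. 0) i c + mat_mul (n 3) h4 (D 4) i c"
  proof (cases "m4 = 0")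
    case False
    have "mat_mul (n 4) f4 (D 5) r c = 0" if "r < m4" "c < n 5" for r c
    proof -
      have "\<forall>i<m3. mat_vec m4 P4 (\<lambda>t. mat_mul (n 4) f4 (D 5) t c) i = 0"
        using mat_mul_chain_zero[OF E4 DD4 _ that(2)] by (simp add: mat_vec_column)
      with inj that show ?thesis by blast
    qed
    then obtain H where "\<forall>r<m4. \<forall>l<n 4. f4 r l = mat_mul (n 3) H (D 4) r l"
      using exact_at_tr_rows[OF R4] False by blast
    then show ?thesis using that[of H] by simp
  qed (use that in simp)
  obtain h3 where B3: "\<forall>i<m3. \<forall>c<n 3. f3 i c = mat_mul m4 P4 h4 i c + mat_mul (n 2) h3 (D 3) i c"
    using lift_backward[OF E4 B4 _ R3] by auto
  obtain h2 where B2: "\<forall>i<m2. \<forall>c<n 2. f2 i c = mat_mul m3 P3 h3 i c + mat_mul (n 1) h2 (D 2) i c"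
    using lift_backward[OF E3 B3 P34 R2] by blast
  obtain h1 where B1: "\<forall>i<m1. \<forall>c<n 1. x c i = mat_mul m2 P2 h2 i c + mat_mul (n 0) h1 (D 1) i c"
    using lift_backward[OF E2 B2 P23 R1] by blast
  obtain h0 where "\<forall>i<m0. \<forall>c<n 0. f0 i c = mat_mul m1 P1 h1 i c + mat_mul 0 h0 (D 0) i c"
    using lift_backward[OF E1 B1 P12 R0] by blast
  then show ?thesis
    by (intro exI[of _ "\<lambda>t. h1 t 0"]) (simp add: n0 f0_def mat_vec_column)
qed

lemma in_image_if_ideal_multiples_in_image:
  fixes P1 P2 P3 P4 :: "nat \<Rightarrow> nat \<Rightarrow> 'a::comm_ring_1"
  assumes noeth: "noetherian_ring TYPE('a)" and J: "is_ideal J"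
    and ext: "\<And>i. i < 4 \<Longrightarrow> ext_zero J i" and ext4: "0 < m4 \<Longrightarrow> ext_zero J 4"
    and P12: "\<forall>i<m0. \<forall>c<m2. mat_mul m1 P1 P2 i c = 0"
    and P23: "\<forall>i<m1. \<forall>c<m3. mat_mul m2 P2 P3 i c = 0"
    and P34: "\<forall>i<m2. \<forall>c<m4. mat_mul m3 P3 P4 i c = 0"
    and X1: "exact_at m0 m1 m2 P1 P2" and X2: "exact_at m1 m2 m3 P2 P3" and X3: "exact_at m2 m3 m4 P3 P4"
    and inj: "\<And>v. \<forall>i<m3. mat_vec m4 P4 v i = 0 \<Longrightarrow> \<forall>i<m4. v i = 0"
    and y: "\<And>j. j \<in> J \<Longrightarrow> \<exists>x. \<forall>i<m0. j * y i = mat_vec m1 P1 x i"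
  shows "\<exists>x. \<forall>i<m0. y i = mat_vec m1 P1 x i"
proof -
  obtain n D where res: "free_resolution J n D" using resolution_exists[OF noeth J] by blast
  have DD: "\<forall>r<n (i - 1). \<forall>c<n (Suc i). mat_mul (n i) (D i) (D (Suc i)) r c = 0" if "1 \<le> i" for i
    using free_resolution_mat_mul_zero[OF res that] by blast
  have R: "exact_at (n (Suc i)) (n i) (if i = 0 then 0 else n (i - 1)) (tr (D (Suc i))) (tr (D i))"
    if "i < 4 \<or> 0 < m4 \<and> i = 4" for i
    using exact_at_dual_of_ext_zero[OF _ res] ext ext4 that by blast
  show ?thesis
  proof (rule in_image_by_comparison[OF _ _ _ _ _ _ _ _ _ _ P12 P23 P34 X1 X2 X3 inj])
    show "n 0 = 1" using res by (simp add: free_resolution_def)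
    show "\<forall>c\<in>{..<n 1}. \<exists>x. \<forall>i<m0. D 1 0 c * y i = mat_vec m1 P1 x i"
      using y free_resolution_first_entries[OF res] by blast
  qed (use DD[of 1] DD[of 2] DD[of 3] DD[of 4] R[of 0] R[of 1] R[of 2] R[of 3] R[of 4]
      in \<open>simp_all add: numeral_eq_Suc\<close>)
qed

section \<open>The complex \<open>B\<close> in matrix form\<close>

lemma vec_mat_mat_vec: "vec_mat n (mat_vec m A f) B j = (\<Sum>b<m. f b * mat_mul n (tr A) B b j)"
  unfolding vec_mat_def mat_vec_def mat_mul_def tr_def
  by (simp add: sum_distrib_left sum_distrib_right sum.swap[of _ "{..<n}"] ac_simps)

text \<open>\<open>T\<close> is the matrix of the pairing \<open>(e, f) \<mapsto> \<eta>(e \<cdot> f)\<close> on \<open>A\<^sub>1 \<times> A\<^sub>2\<close>; the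
  assumptions \<open>T_D3\<close> and \<open>T_antisym\<close> come from the two Leibniz rules.\<close>

locale B_matrices =
  fixes n1 n2 n3 nc :: nat
    and D1 D2 D3 T Iota Kap :: "nat \<Rightarrow> nat \<Rightarrow> 'a::comm_ring_1" and Lv Eta :: "nat \<Rightarrow> 'a"
  assumes exact_A1: "exact_at 1 n1 n2 D1 D2" and exact_A2: "exact_at n1 n2 n3 D2 D3"
    and D3_inj: "\<And>v. \<forall>i<n2. mat_vec n3 D3 v i = 0 \<Longrightarrow> \<forall>i<n3. v i = 0"
    and D1_D2: "\<And>c. c < n2 \<Longrightarrow> mat_mul n1 D1 D2 0 c = 0"
    and D2_D3: "\<And>r c. r < n1 \<Longrightarrow> c < n3 \<Longrightarrow> mat_mul n2 D2 D3 r c = 0"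
    and dual_exact_A0: "exact_at n1 1 0 (tr D1) (tr (\<lambda>_ _. 0))"
    and dual_exact_A1: "exact_at n2 n1 1 (tr D2) (tr D1)"
    and dual_exact_A2: "exact_at n3 n2 n1 (tr D3) (tr D2)"
    and T_D3: "\<And>a c. a < n1 \<Longrightarrow> c < n3 \<Longrightarrow> mat_mul n2 T D3 a c = D1 0 a * Eta c"
    and T_antisym: "\<And>b b'. b < n2 \<Longrightarrow> b' < n2 \<Longrightarrow> mat_mul n1 (tr D2) T b b' + mat_mul n1 (tr D2) T b' b = 0"
    and Kap_Iota: "\<And>i j. i < nc \<Longrightarrow> j < nc \<Longrightarrow> mat_mul n3 Kap Iota i j = id_mat i j"
    and Eta_Lv: "(\<Sum>l<n3. Eta l * Lv l) = 1"
    and Eta_Iota: "\<And>j. j < nc \<Longrightarrow> (\<Sum>l<n3. Eta l * Iota l j) = 0"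
    and Iota_Kap_Lv_Eta: "\<And>i j. i < n3 \<Longrightarrow> j < n3 \<Longrightarrow> mat_mul nc Iota Kap i j + Lv i * Eta j = id_mat i j"
begin

definition in_I :: "'a \<Rightarrow> bool" where
  "in_I s \<longleftrightarrow> (\<exists>e. s = (\<Sum>a<n1. D1 0 a * e a))"

text \<open>The matrices of \<open>\<delta>\<^sub>4\<close>, \<open>\<delta>\<^sub>3\<close>, \<open>\<delta>\<^sub>2\<close> (and \<open>\<delta>\<^sub>1\<close>, which is \<open>tr M4\<close>), identifying
  \<open>Hom(A\<^sub>1, L) \<oplus> A\<^sub>1\<close> with \<open>R^(n1 + n1)\<close>, the \<open>Hom(A\<^sub>1, L)\<close>-coordinates first.\<close>

definition M4 :: "nat \<Rightarrow> nat \<Rightarrow> 'a" where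
  "M4 = mat_mul n3 D3 Iota"

definition M3 :: "nat \<Rightarrow> nat \<Rightarrow> 'a" where
  "M3 i b = (if i < n1 then T i b else D2 (i - n1) b)"

definition M2 :: "nat \<Rightarrow> nat \<Rightarrow> 'a" where
  "M2 b i = (if i < n1 then D2 i b else T (i - n1) b)"

lemma in_I_mult:
  assumes "in_I s"
  shows "in_I (c * s)"
proof -
  obtain e where "s = (\<Sum>a<n1. D1 0 a * e a)" using assms by (auto simp: in_I_def)
  then have "c * s = (\<Sum>a<n1. D1 0 a * (c * e a))" by (simp add: sum_distrib_left ac_simps)
  then show ?thesis unfolding in_I_def by auto
qed

lemma in_I_add:
  assumes "in_I s" and "in_I t"
  shows "in_I (s + t)"
proof -
  obtain e e' where "s = (\<Sum>a<n1. D1 0 a * e a)" "t = (\<Sum>a<n1. D1 0 a * e' a)"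
    using assms by (auto simp: in_I_def)
  then have "s + t = (\<Sum>a<n1. D1 0 a * (e a + e' a))" by (simp add: sum.distrib distrib_left)
  then show ?thesis unfolding in_I_def by auto
qed

text \<open>The factorisation makes multiplication by \<open>r\<close> null-homotopic on \<open>A\<close> (the homotopy is
  extended downwards using exactness of \<open>A\<^sup>*\<close>), so \<open>r\<close> annihilates \<open>H\<^sub>0(A) = R/I\<close>.\<close>

lemma in_I_if_scalar_factors_through_D3:
  assumes H: "\<forall>i<n3. \<forall>c<n3. r * id_mat i c = mat_mul n2 H3 D3 i c"
  shows "in_I r"
proof -
  define f3 where "f3 = (\<lambda>i c. r * id_mat i c)"
  have A3: "\<forall>i<n2. \<forall>c<n3. mat_mul n3 D3 f3 i c = mat_mul n2 f3 D3 i c"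
    and A2: "\<forall>i<n1. \<forall>c<n2. mat_mul n2 D2 f3 i c = mat_mul n1 f3 D2 i c"
    by (simp_all add: f3_def mat_mul_scalar_id_right mat_mul_scalar_id_left mult.commute)
  have A1: "\<forall>i<1. \<forall>c<n1. mat_mul n1 D1 f3 i c = mat_mul 1 (\<lambda>_ _. r) D1 i c"
  proof (intro allI impI)
    fix i c assume "i < (1::nat)" "c < n1"
    then have "mat_mul n1 D1 f3 i c = D1 0 c * r" by (simp add: f3_def mat_mul_scalar_id_right)
    then show "mat_mul n1 D1 f3 i c = mat_mul 1 (\<lambda>_ _. r) D1 i c" by (simp add: mat_mul_def mult.commute)
  qed
  have "\<forall>i<n3. \<forall>c<n3. f3 i c = mat_mul 0 (\<lambda>_ _. 0) (\<lambda>_ _. 0) i c + mat_mul n2 H3 D3 i c"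
    using H by (simp add: f3_def)
  from lift_backward[OF A3 this _ dual_exact_A2] obtain h2
    where "\<forall>i<n2. \<forall>c<n2. f3 i c = mat_mul n3 D3 H3 i c + mat_mul n1 h2 D2 i c" by auto
  from lift_backward[OF A2 this _ dual_exact_A1] D2_D3 obtain h1
    where "\<forall>i<n1. \<forall>c<n1. f3 i c = mat_mul n2 D2 h2 i c + mat_mul 1 h1 D1 i c" by auto
  from lift_backward[OF A1 this _ dual_exact_A0] D1_D2 obtain h0
    where "\<forall>i<1. \<forall>c<1. r = mat_mul n1 D1 h1 i c + mat_mul 0 h0 (\<lambda>_ _. 0) i c" by auto
  then show ?thesis by (auto simp: in_I_def mat_mul_def intro!: exI[of _ "\<lambda>a. h1 a 0"])
qed

lemma row_decomposition:
  "l < n3 \<Longrightarrow> g l = vec_mat nc (vec_mat n3 g Iota) Kap l + (\<Sum>l'<n3. g l' * Lv l') * Eta l"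
proof -
  assume l: "l < n3"
  have "g l = (\<Sum>l'<n3. g l' * id_mat l' l)" using l by (simp add: sum_id_mat_right)
  also have "\<dots> = (\<Sum>l'<n3. g l' * mat_mul nc Iota Kap l' l + g l' * Lv l' * Eta l)"
    by (rule sum.cong[OF refl]) (subst Iota_Kap_Lv_Eta[symmetric], use l in \<open>simp_all add: algebra_simps\<close>)
  also have "\<dots> = vec_mat nc (vec_mat n3 g Iota) Kap l + (\<Sum>l'<n3. g l' * Lv l') * Eta l"
    by (simp add: sum.distrib vec_mat_mat_mul sum_distrib_right vec_mat_def[of n3 g "mat_mul nc Iota Kap"])
  finally show ?thesis .
qed

lemma column_decomposition:
  "l < n3 \<Longrightarrow> h l = mat_vec nc Iota (mat_vec n3 Kap h) l + Lv l * (\<Sum>l'<n3. Eta l' * h l')"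
proof -
  assume l: "l < n3"
  have "h l = (\<Sum>l'<n3. id_mat l l' * h l')" using l by (simp add: sum_id_mat_left)
  also have "\<dots> = (\<Sum>l'<n3. mat_mul nc Iota Kap l l' * h l' + Lv l * (Eta l' * h l'))"
    by (rule sum.cong[OF refl]) (subst Iota_Kap_Lv_Eta[symmetric], use l in \<open>simp_all add: algebra_simps\<close>)
  also have "\<dots> = mat_vec nc Iota (mat_vec n3 Kap h) l + Lv l * (\<Sum>l'<n3. Eta l' * h l')"
    by (simp add: sum.distrib mat_vec_mat_mul sum_distrib_left mat_vec_def[of n3 "mat_mul nc Iota Kap"])
  finally show ?thesis .
qed

lemma T_M4: "a < n1 \<Longrightarrow> j < nc \<Longrightarrow> mat_mul n2 T M4 a j = 0"
proof -
  assume a: "a < n1" and j: "j < nc"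
  have "mat_mul n2 T M4 a j = mat_mul n3 (mat_mul n2 T D3) Iota a j" by (simp add: M4_def mat_mul_assoc)
  also have "\<dots> = mat_mul n3 (\<lambda>a l. D1 0 a * Eta l) Iota a j" by (rule mat_mul_cong) (use a T_D3 in auto)
  also have "\<dots> = D1 0 a * (\<Sum>l<n3. Eta l * Iota l j)" by (simp add: mat_mul_def sum_distrib_left mult.assoc)
  finally show ?thesis using Eta_Iota[OF j] by simp
qed

lemma D2_M4: "a < n1 \<Longrightarrow> j < nc \<Longrightarrow> mat_mul n2 D2 M4 a j = 0"
proof -
  assume a: "a < n1" and j: "j < nc"
  have "mat_mul n2 D2 M4 a j = mat_mul n3 (mat_mul n2 D2 D3) Iota a j" by (simp add: M4_def mat_mul_assoc)
  also have "\<dots> = mat_mul n3 (\<lambda>_ _. 0) Iota a j" by (rule mat_mul_cong) (use a D2_D3 in auto)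
  finally show ?thesis by simp
qed

lemma M3_M4: "i < n1 + n1 \<Longrightarrow> j < nc \<Longrightarrow> mat_mul n2 M3 M4 i j = 0"
  using T_M4[of i j] D2_M4[of "i - n1" j] by (cases "i < n1") (simp_all add: M3_def mat_mul_def)

lemma M2_M3: "b < n2 \<Longrightarrow> b' < n2 \<Longrightarrow> mat_mul (n1 + n1) M2 M3 b b' = 0"
  using T_antisym[of b b'] unfolding mat_mul_def sum_lessThan_add by (simp add: M2_def M3_def tr_def mult.commute)

lemma tr_M4_M2: "j < nc \<Longrightarrow> i < n1 + n1 \<Longrightarrow> mat_mul n2 (tr M4) M2 j i = 0"
  using D2_M4[of i j] T_M4[of "i - n1" j]
  by (cases "i < n1") (simp_all add: M2_def mat_mul_def tr_def mult.commute)

lemma M2_split: "mat_vec (n1 + n1) M2 x b = vec_mat n1 x D2 b + vec_mat n1 (\<lambda>a. x (n1 + a)) T b"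
  unfolding mat_vec_def vec_mat_def sum_lessThan_add by (simp add: M2_def mult.commute)

lemma M3_mat_vec: "mat_vec n2 M3 f i = (if i < n1 then mat_vec n2 T f i else mat_vec n2 D2 f (i - n1))"
  by (simp add: mat_vec_def M3_def)

lemma T_D2_antisym_vec:
  "b < n2 \<Longrightarrow> vec_mat n1 (mat_vec n2 D2 f) T b + vec_mat n1 (mat_vec n2 T f) D2 b = 0"
proof -
  assume b: "b < n2"
  have "vec_mat n1 (mat_vec n2 D2 f) T b + vec_mat n1 (mat_vec n2 T f) D2 b =
      (\<Sum>b'<n2. f b' * (mat_mul n1 (tr D2) T b' b + mat_mul n1 (tr D2) T b b'))"
    unfolding vec_mat_mat_vec by (simp add: sum.distrib distrib_left mat_mul_tr_left[of n1 T D2])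
  then show ?thesis using b by (simp add: T_antisym)
qed

lemma M4_inj: "\<forall>i<n2. mat_vec nc M4 v i = 0 \<Longrightarrow> \<forall>i<nc. v i = 0"
proof (intro allI impI)
  fix i assume h: "\<forall>i<n2. mat_vec nc M4 v i = 0" and i: "i < nc"
  have "\<forall>l<n3. mat_vec nc Iota v l = 0"
    using D3_inj h by (simp add: mat_vec_mat_mul M4_def)
  then have "mat_vec n3 Kap (mat_vec nc Iota v) i = 0" by (simp add: mat_vec_def)
  moreover have "mat_vec nc (mat_mul n3 Kap Iota) v i = (\<Sum>j<nc. id_mat i j * v j)"
    unfolding mat_vec_def using i by (intro sum.cong refl) (simp add: Kap_Iota)
  ultimately show "v i = 0" using i by (simp add: sum_id_mat_left mat_vec_mat_mul)
qed

lemma exact_at_M3: "exact_at (n1 + n1) n2 nc M3 M4"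
  unfolding exact_at_def
proof (intro allI impI)
  fix v assume h: "\<forall>i<n1 + n1. mat_vec n2 M3 v i = 0"
  have hT: "mat_vec n2 T v a = 0" and hD: "mat_vec n2 D2 v a = 0" if "a < n1" for a
    using h[rule_format, of a] h[rule_format, of "n1 + a"] that by (simp_all add: M3_mat_vec)
  obtain w where w: "\<forall>b<n2. v b = mat_vec n3 D3 w b"
    using exact_A2 hD unfolding exact_at_def by blast
  define s where "s = (\<Sum>l<n3. Eta l * w l)"
  have "vec_mat 1 (\<lambda>_. s) D1 a = 0" if a: "a < n1" for a
  proof -
    have "0 = mat_vec n2 T (mat_vec n3 D3 w) a"
      using hT[OF a] w by (simp add: mat_vec_def)
    also have "\<dots> = mat_vec n3 (mat_mul n2 T D3) w a" by (rule mat_vec_mat_mul)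
    also have "\<dots> = (\<Sum>l<n3. D1 0 a * Eta l * w l)"
      unfolding mat_vec_def using a T_D3 by (intro sum.cong) auto
    finally show ?thesis by (simp add: vec_mat_def s_def sum_distrib_left ac_simps)
  qed
  then have "\<exists>w. \<forall>l<1. s = vec_mat 0 w (\<lambda>_ _. 0) l"
    using dual_exact_A0 unfolding exact_at_tr_iff by blast
  then have "s = 0" by (simp add: vec_mat_def)
  then have "w l = mat_vec nc Iota (mat_vec n3 Kap w) l" if "l < n3" for l
    using column_decomposition[OF that, of w] by (simp add: s_def)
  then have "mat_vec n3 D3 w = mat_vec n3 D3 (mat_vec nc Iota (mat_vec n3 Kap w))"
    by (rule mat_vec_cong)
  then have "v i = mat_vec nc M4 (mat_vec n3 Kap w) i" if "i < n2" for i
    using w that by (simp add: M4_def mat_vec_mat_mul)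
  then show "\<exists>u. \<forall>i<n2. v i = mat_vec nc M4 u i" by blast
qed

text \<open>The \<open>A\<^sub>1\<close>-component of a cycle of \<open>\<delta>\<^sub>2\<close> is a cycle of \<open>d\<^sub>1\<close>: apply \<open>d\<^sub>3\<^sup>*\<close> and use
  \<open>T d\<^sub>3 = d\<^sub>1 \<otimes> \<eta>\<close> together with \<open>\<eta>(Lv) = 1\<close>.\<close>

lemma D1_vanishes_on_M2_cycle:
  assumes h: "\<forall>b<n2. vec_mat n1 x D2 b + vec_mat n1 e T b = 0"
  shows "(\<Sum>a<n1. D1 0 a * e a) = 0"
proof -
  let ?d = "\<Sum>a<n1. D1 0 a * e a"
  have dEta: "?d * Eta l = 0" if l: "l < n3" for l
  proof -
    have "0 = vec_mat n2 (\<lambda>b. vec_mat n1 x D2 b + vec_mat n1 e T b) D3 l"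
      by (rule vec_mat_zero[symmetric]) (use h in auto)
    also have "\<dots> = vec_mat n1 x (mat_mul n2 D2 D3) l + vec_mat n1 e (mat_mul n2 T D3) l"
      by (simp add: vec_mat_add vec_mat_mat_mul)
    also have "vec_mat n1 x (mat_mul n2 D2 D3) l = 0"
      by (rule vec_mat_zero_mat) (use l D2_D3 in auto)
    also have "vec_mat n1 e (mat_mul n2 T D3) l = (\<Sum>a<n1. e a * (D1 0 a * Eta l))"
      unfolding vec_mat_def using l T_D3 by (intro sum.cong) auto
    also have "\<dots> = ?d * Eta l"
      unfolding sum_distrib_right by (intro sum.cong) (simp_all add: ac_simps)
    finally show ?thesis by simp
  qed
  have "?d = ?d * (\<Sum>l<n3. Eta l * Lv l)" using Eta_Lv by simp
  also have "\<dots> = (\<Sum>l<n3. (?d * Eta l) * Lv l)" by (simp add: sum_distrib_left mult.assoc)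
  finally show ?thesis using dEta by simp
qed

lemma D2_D3_mat_vec: "a < n1 \<Longrightarrow> mat_vec n2 D2 (mat_vec n3 D3 v) a = 0"
  unfolding mat_vec_mat_mul by (rule mat_vec_zero_mat) (use D2_D3 in auto)

lemma T_boundary_Lv: "i < n1 \<Longrightarrow> mat_vec n2 T (mat_vec n3 D3 (\<lambda>l. c * Lv l)) i = D1 0 i * c"
proof -
  assume i: "i < n1"
  have "mat_vec n2 T (mat_vec n3 D3 (\<lambda>l. c * Lv l)) i = mat_vec n3 (mat_mul n2 T D3) (\<lambda>l. c * Lv l) i"
    by (rule mat_vec_mat_mul)
  also have "\<dots> = (\<Sum>l<n3. D1 0 i * Eta l * (c * Lv l))"
    unfolding mat_vec_def using i T_D3 by (intro sum.cong) auto
  also have "\<dots> = D1 0 i * c * (\<Sum>l<n3. Eta l * Lv l)"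
    by (simp add: sum_distrib_left ac_simps)
  finally show ?thesis using Eta_Lv by simp
qed

lemma exact_at_M2: "exact_at n2 (n1 + n1) n2 M2 M3"
  unfolding exact_at_def
proof (intro allI impI)
  fix x assume "\<forall>i<n2. mat_vec (n1 + n1) M2 x i = 0"
  then have h: "\<forall>b<n2. vec_mat n1 x D2 b + vec_mat n1 (\<lambda>a. x (n1 + a)) T b = 0"
    by (simp add: M2_split)
  then have "\<forall>i<1. mat_vec n1 D1 (\<lambda>a. x (n1 + a)) i = 0"
    using D1_vanishes_on_M2_cycle by (simp add: mat_vec_def)
  then obtain f1 where f1: "\<forall>a<n1. x (n1 + a) = mat_vec n2 D2 f1 a"
    using exact_A1 unfolding exact_at_def by blast
  define ph where "ph a = x a - mat_vec n2 T f1 a" for a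
  have "vec_mat n1 ph D2 b = 0" if b: "b < n2" for b
  proof -
    have "vec_mat n1 (\<lambda>a. x (n1 + a)) T b = vec_mat n1 (mat_vec n2 D2 f1) T b"
      using f1 by (intro vec_mat_cong) simp
    then have "vec_mat n1 x D2 b = - vec_mat n1 (mat_vec n2 D2 f1) T b"
      using h[rule_format, OF b] by (simp add: eq_neg_iff_add_eq_0)
    then have "vec_mat n1 ph D2 b =
        - (vec_mat n1 (mat_vec n2 D2 f1) T b + vec_mat n1 (mat_vec n2 T f1) D2 b)"
      unfolding ph_def vec_mat_def[of n1 "\<lambda>a. x a - _ a"] by (simp add: left_diff_distrib sum_subtractf vec_mat_def)
    then show ?thesis using T_D2_antisym_vec[OF b] by simp
  qed
  then obtain w0 where w0: "\<forall>a<n1. ph a = vec_mat 1 w0 D1 a"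
    using dual_exact_A1 unfolding exact_at_tr_iff by blast
  \<comment> \<open>correct \<open>f1\<close> by a boundary so that it also produces the first component\<close>
  define f where "f = (\<lambda>b. f1 b + mat_vec n3 D3 (\<lambda>l. w0 0 * Lv l) b)"
  have "x i = mat_vec n2 M3 f i" if i: "i < n1 + n1" for i
  proof (cases "i < n1")
    case True
    then have "ph i = D1 0 i * w0 0" using w0 by (simp add: vec_mat_def mult.commute)
    then show ?thesis
      using True T_boundary_Lv[OF True, of "w0 0"] by (simp add: M3_mat_vec f_def mat_vec_add ph_def diff_eq_eq)
  next
    case False
    then have a: "i - n1 < n1" using i by simp
    then show ?thesis
      using False f1[rule_format, OF a] D2_D3_mat_vec[OF a] by (simp add: M3_mat_vec f_def mat_vec_add)
  qed
  then show "\<exists>f. \<forall>i<n1 + n1. x i = mat_vec n2 M3 f i" by blast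
qed

lemma exact_at_tr_M4:
  assumes eta_multiples_in_I: "\<And>s \<psi>. \<forall>l<n3. s * Eta l = vec_mat n2 \<psi> D3 l \<Longrightarrow> in_I s"
  shows "exact_at nc n2 (n1 + n1) (tr M4) M2"
  unfolding exact_at_def
proof (intro allI impI)
  fix \<psi> assume h: "\<forall>j<nc. mat_vec n2 (tr M4) \<psi> j = 0"
  define s where "s = (\<Sum>l<n3. vec_mat n2 \<psi> D3 l * Lv l)"
  have "vec_mat n3 (vec_mat n2 \<psi> D3) Iota j = 0" if "j < nc" for j
    using h that by (simp add: vec_mat_mat_mul M4_def) (simp add: vec_mat_def mat_vec_def tr_def mult.commute)
  then have "vec_mat nc (vec_mat n3 (vec_mat n2 \<psi> D3) Iota) Kap l = 0" for l
    by (simp add: vec_mat_zero)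
  then have ws: "\<forall>l<n3. s * Eta l = vec_mat n2 \<psi> D3 l"
    using row_decomposition[of _ "vec_mat n2 \<psi> D3"] unfolding s_def by simp
  then obtain e where e: "s = (\<Sum>a<n1. D1 0 a * e a)" using eta_multiples_in_I in_I_def by blast
  define \<psi>' where "\<psi>' b = \<psi> b - vec_mat n1 e T b" for b
  have "vec_mat n2 \<psi>' D3 l = 0" if l: "l < n3" for l
  proof -
    have "vec_mat n2 \<psi>' D3 l = vec_mat n2 \<psi> D3 l - vec_mat n2 (vec_mat n1 e T) D3 l"
      unfolding \<psi>'_def vec_mat_def[of n2] by (simp add: left_diff_distrib sum_subtractf)
    also have "vec_mat n2 (vec_mat n1 e T) D3 l = vec_mat n1 e (mat_mul n2 T D3) l"
      by (rule vec_mat_mat_mul)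
    also have "\<dots> = (\<Sum>a<n1. e a * (D1 0 a * Eta l))"
      unfolding vec_mat_def using l T_D3 by (intro sum.cong) auto
    also have "\<dots> = s * Eta l"
      unfolding e sum_distrib_right by (intro sum.cong) (simp_all add: ac_simps)
    finally show ?thesis using ws l by simp
  qed
  then obtain w' where w': "\<forall>b<n2. \<psi>' b = vec_mat n1 w' D2 b"
    using dual_exact_A2 unfolding exact_at_tr_iff by blast
  define x where "x i = (if i < n1 then w' i else e (i - n1))" for i
  have "\<psi> b = mat_vec (n1 + n1) M2 x b" if "b < n2" for b
    using w' that by (simp add: M2_split x_def \<psi>'_def vec_mat_def diff_eq_eq)
  then show "\<exists>x. \<forall>b<n2. \<psi> b = mat_vec (n1 + n1) M2 x b" by blast
qed

text \<open>Where \<open>J\<close> enters: for a maximal minor \<open>\<Delta>\<close> of \<open>M4\<close>, Cramer's rule makes \<open>\<Delta>\<close> times the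
  identity of \<open>C\<close> factor through \<open>M4\<close>; combined with the splitting \<open>A\<^sub>3 = C \<oplus> L\<close> this
  makes \<open>\<Delta> s\<close> times the identity of \<open>A\<^sub>3\<close> factor through \<open>d\<^sub>3\<close>.\<close>

lemma minor_mult_in_I:
  assumes cramer: "\<forall>u. \<exists>z. \<forall>j<nc. \<Delta> * u j = vec_mat n2 z M4 j"
    and s: "\<forall>l<n3. s * Eta l = vec_mat n2 \<psi> D3 l"
  shows "in_I (\<Delta> * s)"
proof -
  obtain zf where zf: "\<And>u j. j < nc \<Longrightarrow> \<Delta> * u j = vec_mat n2 (zf u) M4 j" using cramer by metis
  define g where "g l0 = vec_mat n2 (zf (\<lambda>j. Iota l0 j)) D3" for l0
  define t where "t l0 = (\<Sum>l<n3. g l0 l * Lv l)" for l0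
  define H3 where "H3 l0 b = s * zf (\<lambda>j. Iota l0 j) b - t l0 * \<psi> b + Lv l0 * \<Delta> * \<psi> b" for l0 b
  have "(\<Delta> * s) * id_mat l0 l = mat_mul n2 H3 D3 l0 l" if l0: "l0 < n3" and l: "l < n3" for l0 l
  proof -
    have "vec_mat n3 (g l0) Iota j = \<Delta> * Iota l0 j" if "j < nc" for j
      using zf[OF that, of "\<lambda>j. Iota l0 j"] by (simp add: g_def vec_mat_mat_mul M4_def)
    then have "vec_mat nc (vec_mat n3 (g l0) Iota) Kap l = \<Delta> * mat_mul nc Iota Kap l0 l"
      unfolding vec_mat_def mat_mul_def by (simp add: sum_distrib_left mult.assoc)
    also have "mat_mul nc Iota Kap l0 l = id_mat l0 l - Lv l0 * Eta l"
      using Iota_Kap_Lv_Eta[OF l0 l] by (simp add: eq_diff_eq)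
    finally have gl: "g l0 l = \<Delta> * (id_mat l0 l - Lv l0 * Eta l) + t l0 * Eta l"
      using row_decomposition[OF l, of "g l0"] by (simp add: t_def)
    have "mat_mul n2 H3 D3 l0 l = s * g l0 l - t l0 * vec_mat n2 \<psi> D3 l + Lv l0 * \<Delta> * vec_mat n2 \<psi> D3 l"
      unfolding mat_mul_def H3_def g_def vec_mat_def
      by (simp add: algebra_simps sum.distrib sum_subtractf sum_distrib_left)
    also have "\<dots> = (\<Delta> * s) * id_mat l0 l"
      using s[rule_format, OF l, symmetric] unfolding gl by (simp add: algebra_simps)
    finally show ?thesis by simp
  qed
  then show ?thesis by (intro in_I_if_scalar_factors_through_D3) blast
qed

lemma minor_ideal_mult_in_I:
  assumes "j \<in> minor_ideal n2 nc M4" and s: "\<forall>l<n3. s * Eta l = vec_mat n2 \<psi> D3 l"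
  shows "in_I (j * s)"
  using assms(1) unfolding minor_ideal_def
proof (induction rule: ideal_gen_induct)
  case zero
  show ?case unfolding in_I_def by (intro exI[of _ "\<lambda>_. 0"]) simp
next
  case (add a b)
  then show ?case by (simp add: distrib_right in_I_add)
next
  case (base c \<Delta>)
  then obtain \<sigma> where "\<Delta> = det_nat nc (\<lambda>i j. M4 (\<sigma> i) j)" "\<sigma> ` {..<nc} \<subseteq> {..<n2}"
    by (auto simp: max_minors_def)
  then have "in_I (\<Delta> * s)" using minor_mult_in_row_space minor_mult_in_I[OF _ s] by metis
  then show ?case using in_I_mult[of "\<Delta> * s" c] by (simp add: mult.assoc)
qed

lemma minor_ideal_mult_in_row_space:
  assumes "j \<in> minor_ideal n2 nc M4"
  shows "\<exists>x. \<forall>i<nc. j * y i = vec_mat n2 x M4 i"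
  using assms unfolding minor_ideal_def
proof (induction rule: ideal_gen_induct)
  case zero
  show ?case by (intro exI[of _ "\<lambda>_. 0"]) (simp add: vec_mat_def)
next
  case (add a b)
  then obtain x x' where "\<forall>i<nc. a * y i = vec_mat n2 x M4 i" "\<forall>i<nc. b * y i = vec_mat n2 x' M4 i"
    by blast
  then show ?case by (intro exI[of _ "\<lambda>b. x b + x' b"]) (simp add: vec_mat_add distrib_right)
next
  case (base c \<Delta>)
  then obtain \<sigma> where "\<Delta> = det_nat nc (\<lambda>i j. M4 (\<sigma> i) j)" "\<sigma> ` {..<nc} \<subseteq> {..<n2}"
    by (auto simp: max_minors_def)
  then obtain z where "\<forall>j<nc. \<Delta> * y j = vec_mat n2 z M4 j" using minor_mult_in_row_space by blast
  then show ?case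
    by (intro exI[of _ "\<lambda>b. c * z b"]) (simp add: vec_mat_def sum_distrib_left mult.assoc)
qed

text \<open>Here \<open>grade J \<ge> 4\<close> is used: \<open>J s \<subseteq> I\<close>, and \<open>A\<close> resolves \<open>R/I\<close>, so the comparison
  with a resolution of \<open>R/J\<close> applies.\<close>

lemma in_I_if_eta_multiple_in_im_dual_D3:
  assumes noeth: "noetherian_ring TYPE('a)" and grade: "4 \<le> grade (minor_ideal n2 nc M4)"
    and s: "\<forall>l<n3. s * Eta l = vec_mat n2 \<psi> D3 l"
  shows "in_I s"
proof -
  have "\<exists>x. \<forall>i<1. s = mat_vec n1 D1 x i"
  proof (rule in_image_if_ideal_multiples_in_image[where ?m4.0 = 0])
    show "\<And>i. i < 4 \<Longrightarrow> ext_zero (minor_ideal n2 nc M4) i"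
      using ext_zero_of_grade_ge[of 4] grade by (simp add: numeral_eq_enat)
    show "exact_at n2 n3 0 D3 (\<lambda>_ _. 0)"
      using D3_inj by (simp add: exact_at_def mat_vec_def)
    show "\<exists>x. \<forall>i<1. j * s = mat_vec n1 D1 x i" if "j \<in> minor_ideal n2 nc M4" for j
      using minor_ideal_mult_in_I[OF that s] by (auto simp: in_I_def mat_vec_def)
  qed (use noeth exact_A1 exact_A2 D1_D2 D2_D3 in \<open>auto simp: minor_ideal_def is_ideal_ideal_gen\<close>)
  then show ?thesis by (auto simp: in_I_def mat_vec_def)
qed

text \<open>The same chase, applied to the exact complex \<open>B\<close>, makes \<open>\<delta>\<^sub>4\<^sup>* = tr M4\<close> surjective;
  so \<open>M4\<close> has a left inverse and \<open>J\<close> is the unit ideal.\<close>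

lemma minor_ideal_eq_UNIV_if_ext_zero_4:
  assumes noeth: "noetherian_ring TYPE('a)" and grade: "4 \<le> grade (minor_ideal n2 nc M4)"
    and ext4: "ext_zero (minor_ideal n2 nc M4) 4"
  shows "minor_ideal n2 nc M4 = UNIV"
proof -
  have surj: "\<exists>x. \<forall>i<nc. y i = mat_vec n2 (tr M4) x i" for y
  proof (rule in_image_if_ideal_multiples_in_image)
    show "\<And>i. i < 4 \<Longrightarrow> ext_zero (minor_ideal n2 nc M4) i"
      using ext_zero_of_grade_ge[of 4] grade by (simp add: numeral_eq_enat)
    show "exact_at nc n2 (n1 + n1) (tr M4) M2"
      by (rule exact_at_tr_M4) (use in_I_if_eta_multiple_in_im_dual_D3[OF noeth grade] in blast)
    show "\<exists>x. \<forall>i<nc. j * y i = mat_vec n2 (tr M4) x i" if "j \<in> minor_ideal n2 nc M4" for j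
      using minor_ideal_mult_in_row_space[OF that, of y]
      by (simp add: mat_vec_def vec_mat_def tr_def mult.commute)
  qed (use noeth ext4 exact_at_M2 exact_at_M3 M4_inj tr_M4_M2 M2_M3 M3_M4
      in \<open>auto simp: minor_ideal_def is_ideal_ideal_gen\<close>)
  have "\<forall>j\<in>{..<nc}. \<exists>x. \<forall>i<nc. unit_vec j i = mat_vec n2 (tr M4) x i" using surj by blast
  then obtain xf where xf: "\<And>j i. j < nc \<Longrightarrow> i < nc \<Longrightarrow> unit_vec j i = mat_vec n2 (tr M4) (xf j) i"
    by (metis lessThan_iff)
  have "1 \<in> minor_ideal n2 nc M4"
  proof (rule one_in_minor_ideal_if_left_inverse)
    fix i j assume "i < nc" "j < nc"
    then show "mat_mul n2 (\<lambda>j b. xf j b) M4 i j = id_mat i j"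
      using xf[of i j] by (cases "i = j") (simp_all add: mat_mul_def mat_vec_def tr_def unit_vec_def id_mat_def mult.commute)
  qed
  then show ?thesis unfolding minor_ideal_def by (rule ideal_gen_eq_UNIV)
qed

end

definition lin_fun_of :: "nat \<Rightarrow> (nat \<Rightarrow> 'a::comm_ring_1) \<Rightarrow> (nat \<Rightarrow> 'a) \<Rightarrow> 'a" where
  "lin_fun_of n w = (\<lambda>u. if u \<in> vecs n then (\<Sum>a<n. u a * w a) else 0)"

lemma linear_expand:
  fixes \<phi> :: "(nat \<Rightarrow> 'a::comm_ring_1) \<Rightarrow> 'a"
  assumes add: "\<forall>u\<in>vecs n. \<forall>v\<in>vecs n. \<phi> (\<lambda>i. u i + v i) = \<phi> u + \<phi> v"
    and hom: "\<forall>s. \<forall>u\<in>vecs n. \<phi> (smul s u) = s * \<phi> u"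
    and f: "f \<in> vecs n"
  shows "\<phi> f = (\<Sum>b<n. f b * \<phi> (unit_vec b))"
proof -
  have "\<phi> (trunc_vec k f) = (\<Sum>b<k. f b * \<phi> (unit_vec b))" if "k \<le> n" for k
    using that
  proof (induction k)
    case 0
    have "trunc_vec 0 f = smul 0 (\<lambda>_. 0::'a)" by (simp add: trunc_vec_def smul_def)
    then show ?case using hom by simp
  next
    case (Suc k)
    have "trunc_vec (Suc k) f = (\<lambda>i. trunc_vec k f i + smul (f k) (unit_vec k) i)"
      by (auto simp: trunc_vec_def smul_def unit_vec_def fun_eq_iff less_Suc_eq)
    moreover have "trunc_vec k f \<in> vecs n"
      using Suc.prems by (auto simp: trunc_vec_def vecs_def)
    moreover have "smul (f k) (unit_vec k) \<in> vecs n"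
      using Suc.prems by simp
    ultimately show ?case using add hom Suc by simp
  qed
  from this[of n] show ?thesis using f by (simp add: trunc_vec_id)
qed

lemma lin_fun_expand: "\<phi> \<in> lin_fun n \<Longrightarrow> u \<in> vecs n \<Longrightarrow> \<phi> u = (\<Sum>b<n. u b * \<phi> (unit_vec b))"
  by (rule linear_expand) (auto simp: lin_fun_def)

lemma lin_fun_of_in_lin_fun: "lin_fun_of n w \<in> lin_fun n"
  unfolding lin_fun_def lin_fun_of_def
  by (auto simp: distrib_right sum.distrib smul_def sum_distrib_left mult.assoc smul_in_vecs[unfolded smul_def])

lemma lin_fun_of_unit_vec: "a < n \<Longrightarrow> lin_fun_of n w (unit_vec a) = w a"
  by (simp add: lin_fun_of_def sum_unit_vec_left)

lemma lin_fun_eq_lin_fun_of: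
  assumes "\<phi> \<in> lin_fun n"
  shows "\<phi> = lin_fun_of n (\<lambda>b. \<phi> (unit_vec b))"
proof
  fix u show "\<phi> u = lin_fun_of n (\<lambda>b. \<phi> (unit_vec b)) u"
    using lin_fun_expand[OF assms, of u] assms by (cases "u \<in> vecs n") (auto simp: lin_fun_of_def lin_fun_def)
qed

lemma lin_fun_of_eq_iff: "lin_fun_of n w = lin_fun_of n w' \<longleftrightarrow> (\<forall>a<n. w a = w' a)"
proof (intro iffI allI impI)
  fix a assume "lin_fun_of n w = lin_fun_of n w'" "a < n"
  then have "lin_fun_of n w (unit_vec a) = lin_fun_of n w' (unit_vec a)" by simp
  then show "w a = w' a" using \<open>a < n\<close> by (simp add: lin_fun_of_unit_vec)
qed (auto simp: lin_fun_of_def fun_eq_iff intro: sum.cong)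

lemma zero_in_lin_fun: "(\<lambda>_. 0) \<in> lin_fun n"
  by (simp add: lin_fun_def)

lemma all_less_add_iff: "(\<forall>i<a + (b::nat). Q i) \<longleftrightarrow> (\<forall>i<a. Q i) \<and> (\<forall>j<b. Q (a + j))" (is "?L \<longleftrightarrow> ?R")
proof
  assume R: ?R
  show ?L
  proof (intro allI impI)
    fix i assume "i < a + b"
    then show "Q i" using R by (cases "i < a") (auto dest!: spec[of _ "i - a"])
  qed
qed auto

lemma lin_fun_of_eq_0_iff:
  fixes w :: "nat \<Rightarrow> 'a::comm_ring_1"
  shows "lin_fun_of n w = (\<lambda>_. 0) \<longleftrightarrow> (\<forall>a<n. w a = 0)"
proof -
  have "lin_fun_of n (\<lambda>_. 0) = (\<lambda>_. 0 :: 'a)" by (simp add: lin_fun_of_def fun_eq_iff)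
  then show ?thesis using lin_fun_of_eq_iff[of n w "\<lambda>_. 0"] by simp
qed

section \<open>Exactness of \<open>B\<close>\<close>

locale B_complex = B_matrices n1 n2 n3 nc D1 D2 D3 T Iota Kap Lv Eta
  for n1 n2 n3 nc and D1 D2 D3 T Iota Kap :: "nat \<Rightarrow> nat \<Rightarrow> 'a::comm_ring_1" and Lv Eta +
  fixes p q :: nat and m12 :: "(nat \<Rightarrow> 'a) \<Rightarrow> (nat \<Rightarrow> 'a) \<Rightarrow> (nat \<Rightarrow> 'a)"
  assumes n1: "p + 2 = n1" and n2: "p + q = n2" and n3: "q - 1 = n3" and nc: "q - 2 = nc"
    and eta_m12: "\<And>e f. e \<in> vecs n1 \<Longrightarrow> f \<in> vecs n2 \<Longrightarrow> lin_form n3 Eta (m12 e f) = (\<Sum>a<n1. e a * mat_vec n2 T f a)"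
begin

definition coords :: "((nat \<Rightarrow> 'a) \<Rightarrow> 'a) \<Rightarrow> (nat \<Rightarrow> 'a) \<Rightarrow> nat \<Rightarrow> 'a" where
  "coords \<phi> e = (\<lambda>i. if i < n1 then \<phi> (unit_vec i) else e (i - n1))"

lemma delta4_eq: "delta4 p q D3 Iota c = mat_app n2 nc M4 c"
proof -
  have "mat_vec n3 D3 (mat_app n3 nc Iota c) = mat_vec n3 D3 (mat_vec nc Iota c)"
    by (rule mat_vec_cong) (simp add: mat_app_eq_mat_vec)
  then have "mat_app n2 n3 D3 (mat_app n3 nc Iota c) = mat_app n2 nc M4 c"
    by (simp add: mat_app_eq_mat_vec[of n2] fun_eq_iff mat_vec_mat_mul M4_def)
  then show ?thesis unfolding delta4_def n2 n3 nc .
qed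

lemma delta3_eq: "delta3 p q D2 m12 Eta f = (lin_fun_of n1 (mat_vec n2 T f), mat_app n1 n2 D2 f)"
  if "f \<in> vecs n2"
  using that unfolding delta3_def n1 n2 n3 by (auto simp: lin_fun_of_def eta_m12)

lemma delta2_eq:
  assumes \<phi>: "\<phi> \<in> lin_fun n1" and e: "e \<in> vecs n1"
  shows "delta2 p q D2 m12 Eta (\<phi>, e) = lin_fun_of n2 (mat_vec (n1 + n1) M2 (coords \<phi> e))"
proof -
  have "\<phi> (mat_app n1 n2 D2 f) + lin_form n3 Eta (m12 e f) = (\<Sum>b<n2. f b * mat_vec (n1 + n1) M2 (coords \<phi> e) b)"
    if f: "f \<in> vecs n2" for f
  proof -
    have "\<phi> (mat_app n1 n2 D2 f) = (\<Sum>a<n1. mat_app n1 n2 D2 f a * \<phi> (unit_vec a))"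
      by (rule lin_fun_expand[OF \<phi> mat_app_in_vecs])
    also have "\<dots> = (\<Sum>a<n1. (\<Sum>b<n2. D2 a b * f b) * \<phi> (unit_vec a))"
      by (simp add: mat_app_def)
    also have "\<dots> = (\<Sum>b<n2. f b * (\<Sum>a<n1. D2 a b * \<phi> (unit_vec a)))"
      by (rule sum_mult_sum_swap)
    also have "\<dots> = (\<Sum>b<n2. f b * vec_mat n1 (coords \<phi> e) D2 b)"
      by (simp add: vec_mat_def coords_def mult.commute)
    finally have 1: "\<phi> (mat_app n1 n2 D2 f) = (\<Sum>b<n2. f b * vec_mat n1 (coords \<phi> e) D2 b)" .
    have "lin_form n3 Eta (m12 e f) = (\<Sum>a<n1. (\<Sum>b<n2. T a b * f b) * e a)"
      using eta_m12[OF e f] by (simp add: mat_vec_def mult.commute)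
    also have "\<dots> = (\<Sum>b<n2. f b * (\<Sum>a<n1. T a b * e a))"
      by (rule sum_mult_sum_swap)
    also have "\<dots> = (\<Sum>b<n2. f b * vec_mat n1 (\<lambda>a. coords \<phi> e (n1 + a)) T b)"
      by (simp add: vec_mat_def coords_def mult.commute)
    finally show ?thesis
      using 1 by (simp add: M2_split distrib_left sum.distrib)
  qed
  then show ?thesis unfolding delta2_def n1 n2 n3 by (auto simp: lin_fun_of_def)
qed

lemma delta1_lin_fun_of: "delta1 p q D3 Iota (lin_fun_of n2 w) = lin_fun_of nc (mat_vec n2 (tr M4) w)"
proof -
  have "(\<Sum>b<n2. mat_app n2 nc M4 c b * w b) = (\<Sum>j<nc. c j * mat_vec n2 (tr M4) w j)" for c
  proof -
    have "(\<Sum>b<n2. mat_app n2 nc M4 c b * w b) = (\<Sum>b<n2. (\<Sum>j<nc. M4 b j * c j) * w b)"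
      by (simp add: mat_app_def)
    also have "\<dots> = (\<Sum>j<nc. c j * (\<Sum>b<n2. M4 b j * w b))"
      by (rule sum_mult_sum_swap)
    finally show ?thesis by (simp add: mat_vec_def tr_def)
  qed
  then show ?thesis unfolding delta1_def nc delta4_eq by (auto simp: lin_fun_of_def)
qed

lemma delta3_eq_iff:
  assumes f: "f \<in> vecs n2" and \<phi>: "\<phi> \<in> lin_fun n1" and e: "e \<in> vecs n1"
  shows "delta3 p q D2 m12 Eta f = (\<phi>, e) \<longleftrightarrow> (\<forall>i<n1 + n1. mat_vec n2 M3 f i = coords \<phi> e i)"
proof -
  have "lin_fun_of n1 (mat_vec n2 T f) = \<phi> \<longleftrightarrow>
      lin_fun_of n1 (mat_vec n2 T f) = lin_fun_of n1 (\<lambda>b. \<phi> (unit_vec b))"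
    using arg_cong[OF lin_fun_eq_lin_fun_of[OF \<phi>], of "\<lambda>x. lin_fun_of n1 (mat_vec n2 T f) = x"] .
  also have "\<dots> \<longleftrightarrow> (\<forall>i<n1. mat_vec n2 M3 f i = coords \<phi> e i)"
    unfolding lin_fun_of_eq_iff by (simp add: M3_mat_vec coords_def)
  finally have 1: "lin_fun_of n1 (mat_vec n2 T f) = \<phi> \<longleftrightarrow> (\<forall>i<n1. mat_vec n2 M3 f i = coords \<phi> e i)" .
  have "mat_app n1 n2 D2 f = e \<longleftrightarrow> (\<forall>a<n1. mat_vec n2 D2 f a = e a)"
  proof
    assume "\<forall>a<n1. mat_vec n2 D2 f a = e a"
    then show "mat_app n1 n2 D2 f = e"
      by (intro vecs_eqI[OF mat_app_in_vecs e]) (simp add: mat_app_eq_mat_vec)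
  qed (auto simp: mat_app_eq_mat_vec)
  also have "\<dots> \<longleftrightarrow> (\<forall>a<n1. mat_vec n2 M3 f (n1 + a) = coords \<phi> e (n1 + a))"
    by (simp add: M3_mat_vec coords_def)
  finally show ?thesis
    using 1 unfolding delta3_eq[OF f] all_less_add_iff by simp
qed

lemma ker_delta4: "{c \<in> vecs nc. delta4 p q D3 Iota c = (\<lambda>_. 0)} = {\<lambda>_. 0}"
proof -
  have zero: "c = (\<lambda>_. 0)" if c: "c \<in> vecs nc" and z: "mat_app n2 nc M4 c = (\<lambda>_. 0)" for c
  proof -
    have "mat_vec nc M4 c i = 0" if "i < n2" for i
      using fun_cong[OF z, of i] that by (simp add: mat_app_eq_mat_vec)
    then have "\<forall>i<nc. c i = 0" using M4_inj by blast
    then show ?thesis using c by (intro vecs_eqI) auto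
  qed
  have "mat_app n2 nc M4 (\<lambda>_. 0) = (\<lambda>_. 0)" by (simp add: mat_app_def fun_eq_iff)
  then show ?thesis
    unfolding delta4_eq by (auto intro: zero)
qed

lemma ker_delta3: "{f \<in> vecs n2. delta3 p q D2 m12 Eta f = (\<lambda>_. 0, \<lambda>_. 0)} = delta4 p q D3 Iota ` vecs nc"
proof -
  have ker: "delta3 p q D2 m12 Eta f = (\<lambda>_. 0, \<lambda>_. 0) \<longleftrightarrow> (\<forall>i<n1 + n1. mat_vec n2 M3 f i = 0)"
    if "f \<in> vecs n2" for f
    using delta3_eq_iff[OF that zero_in_lin_fun zero_in_vecs] by (simp add: coords_def)
  have im: "f \<in> mat_app n2 nc M4 ` vecs nc" if f: "f \<in> vecs n2" "\<forall>i<n1 + n1. mat_vec n2 M3 f i = 0" for f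
  proof -
    obtain u where "\<forall>i<n2. f i = mat_vec nc M4 u i" using exact_at_M3 f(2) unfolding exact_at_def by blast
    then have "f = mat_app n2 nc M4 (trunc_vec nc u)"
      by (intro vecs_eqI[OF f(1) mat_app_in_vecs]) (simp add: mat_app_eq_mat_vec)
    then show ?thesis using trunc_vec_in_vecs by blast
  qed
  have cx: "mat_vec n2 M3 (mat_app n2 nc M4 c) i = 0" if "i < n1 + n1" for c i
  proof -
    have "mat_vec n2 M3 (mat_app n2 nc M4 c) = mat_vec n2 M3 (mat_vec nc M4 c)"
      by (intro mat_vec_cong) (simp add: mat_app_eq_mat_vec)
    then show ?thesis using that M3_M4 by (simp add: mat_vec_mat_mul mat_vec_zero_mat)
  qed
  show ?thesis
  proof (rule subset_antisym; rule subsetI)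
    fix f assume "f \<in> {f \<in> vecs n2. delta3 p q D2 m12 Eta f = (\<lambda>_. 0, \<lambda>_. 0)}"
    then show "f \<in> delta4 p q D3 Iota ` vecs nc"
      using ker[of f] im[of f] unfolding delta4_eq by blast
  next
    fix f assume "f \<in> delta4 p q D3 Iota ` vecs nc"
    then obtain c where "f = mat_app n2 nc M4 c" unfolding delta4_eq by blast
    then show "f \<in> {f \<in> vecs n2. delta3 p q D2 m12 Eta f = (\<lambda>_. 0, \<lambda>_. 0)}"
      using ker[of f] cx[of _ c] by simp
  qed
qed

lemma ker_delta2:
  "{x \<in> lin_fun n1 \<times> vecs n1. delta2 p q D2 m12 Eta x = (\<lambda>_. 0)} = delta3 p q D2 m12 Eta ` vecs n2"
proof (rule subset_antisym; rule subsetI)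
  fix x assume "x \<in> {x \<in> lin_fun n1 \<times> vecs n1. delta2 p q D2 m12 Eta x = (\<lambda>_. 0)}"
  then obtain \<phi> e where x: "x = (\<phi>, e)" and \<phi>: "\<phi> \<in> lin_fun n1" and e: "e \<in> vecs n1"
    and "delta2 p q D2 m12 Eta (\<phi>, e) = (\<lambda>_. 0)" by auto
  then have "\<forall>b<n2. mat_vec (n1 + n1) M2 (coords \<phi> e) b = 0"
    by (simp add: delta2_eq lin_fun_of_eq_0_iff)
  then obtain f where f: "\<forall>i<n1 + n1. coords \<phi> e i = mat_vec n2 M3 f i"
    using exact_at_M2 unfolding exact_at_def by blast
  have "delta3 p q D2 m12 Eta (trunc_vec n2 f) = (\<phi>, e)"
    using f by (simp add: delta3_eq_iff[OF trunc_vec_in_vecs \<phi> e])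
  then show "x \<in> delta3 p q D2 m12 Eta ` vecs n2"
    unfolding x by (rule image_eqI[OF sym trunc_vec_in_vecs])
next
  fix x assume "x \<in> delta3 p q D2 m12 Eta ` vecs n2"
  then obtain f where f: "f \<in> vecs n2" and x: "x = delta3 p q D2 m12 Eta f" by auto
  define \<phi> where "\<phi> = lin_fun_of n1 (mat_vec n2 T f)"
  define e where "e = mat_app n1 n2 D2 f"
  have \<phi>: "\<phi> \<in> lin_fun n1" and e: "e \<in> vecs n1" by (simp_all add: \<phi>_def e_def lin_fun_of_in_lin_fun)
  have x': "x = (\<phi>, e)" by (simp add: x \<phi>_def e_def delta3_eq[OF f])
  then have "mat_vec n2 M3 f i = coords \<phi> e i" if "i < n1 + n1" for i
    using x delta3_eq_iff[OF f \<phi> e] that by simp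
  then have "mat_vec (n1 + n1) M2 (coords \<phi> e) = mat_vec (n1 + n1) M2 (mat_vec n2 M3 f)"
    by (intro mat_vec_cong) simp
  then have "mat_vec (n1 + n1) M2 (coords \<phi> e) b = 0" if "b < n2" for b
    using that M2_M3 by (simp add: mat_vec_mat_mul mat_vec_zero_mat)
  then show "x \<in> {x \<in> lin_fun n1 \<times> vecs n1. delta2 p q D2 m12 Eta x = (\<lambda>_. 0)}"
    using \<phi> e by (simp add: x' delta2_eq lin_fun_of_eq_0_iff)
qed

lemma ker_delta1:
  assumes eta_multiples_in_I: "\<And>s \<psi>. \<forall>l<n3. s * Eta l = vec_mat n2 \<psi> D3 l \<Longrightarrow> in_I s"
  shows "{\<psi> \<in> lin_fun n2. delta1 p q D3 Iota \<psi> = (\<lambda>_. 0)} = delta2 p q D2 m12 Eta ` (lin_fun n1 \<times> vecs n1)"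
proof (rule subset_antisym; rule subsetI)
  fix \<psi> assume "\<psi> \<in> {\<psi> \<in> lin_fun n2. delta1 p q D3 Iota \<psi> = (\<lambda>_. 0)}"
  then have \<psi>: "\<psi> \<in> lin_fun n2" and z: "delta1 p q D3 Iota \<psi> = (\<lambda>_. 0)" by auto
  define w where "w b = \<psi> (unit_vec b)" for b
  have \<psi>w: "\<psi> = lin_fun_of n2 w" unfolding w_def by (rule lin_fun_eq_lin_fun_of[OF \<psi>])
  then have "\<forall>j<nc. mat_vec n2 (tr M4) w j = 0"
    using z by (simp add: delta1_lin_fun_of lin_fun_of_eq_0_iff)
  moreover have "exact_at nc n2 (n1 + n1) (tr M4) M2" using eta_multiples_in_I by (rule exact_at_tr_M4)
  ultimately obtain x where x: "\<forall>b<n2. w b = mat_vec (n1 + n1) M2 x b"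
    unfolding exact_at_def by blast
  define \<phi> where "\<phi> = lin_fun_of n1 x"
  define e where "e = trunc_vec n1 (\<lambda>a. x (n1 + a))"
  have \<phi>: "\<phi> \<in> lin_fun n1" and e: "e \<in> vecs n1" by (simp_all add: \<phi>_def e_def lin_fun_of_in_lin_fun)
  have "mat_vec (n1 + n1) M2 (coords \<phi> e) = mat_vec (n1 + n1) M2 x"
    by (intro mat_vec_cong) (auto simp: coords_def \<phi>_def e_def trunc_vec_def lin_fun_of_unit_vec)
  then have "delta2 p q D2 m12 Eta (\<phi>, e) = \<psi>"
    using x by (simp add: delta2_eq[OF \<phi> e] \<psi>w lin_fun_of_eq_iff)
  then show "\<psi> \<in> delta2 p q D2 m12 Eta ` (lin_fun n1 \<times> vecs n1)"
    by (rule image_eqI[OF sym]) (simp add: \<phi> e)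
next
  fix \<psi> assume "\<psi> \<in> delta2 p q D2 m12 Eta ` (lin_fun n1 \<times> vecs n1)"
  then obtain \<phi> e where \<phi>: "\<phi> \<in> lin_fun n1" and e: "e \<in> vecs n1" and \<psi>: "\<psi> = delta2 p q D2 m12 Eta (\<phi>, e)"
    by auto
  have "mat_vec n2 (tr M4) (mat_vec (n1 + n1) M2 (coords \<phi> e)) j = 0" if "j < nc" for j
    using that tr_M4_M2 by (simp add: mat_vec_mat_mul mat_vec_zero_mat)
  then show "\<psi> \<in> {\<psi> \<in> lin_fun n2. delta1 p q D3 Iota \<psi> = (\<lambda>_. 0)}"
    by (simp add: \<psi> delta2_eq[OF \<phi> e] lin_fun_of_in_lin_fun delta1_lin_fun_of lin_fun_of_eq_0_iff)
qed

lemma B_acyclic_if_eta_multiples_in_I: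
  assumes "\<And>s \<psi>. \<forall>l<n3. s * Eta l = vec_mat n2 \<psi> D3 l \<Longrightarrow> in_I s"
  shows "B_acyclic p q D2 D3 m12 Iota Eta"
  unfolding B_acyclic_def n1 n2 nc using ker_delta4 ker_delta3 ker_delta2 ker_delta1[OF assms] by (intro conjI)

end

section \<open>The DG algebra \<open>A\<close> and the splitting \<open>A\<^sub>3 = C \<oplus> L\<close>\<close>

lemma lin_form_add: "lin_form m w (\<lambda>i. u i + v i) = lin_form m w u + lin_form m w v"
  by (simp add: lin_form_def distrib_left sum.distrib)

lemma lin_form_smul: "lin_form m w (smul s u) = s * lin_form m w u"
  by (simp add: lin_form_def smul_def sum_distrib_left mult.left_commute)

lemma lin_form_unit_vec: "c < m \<Longrightarrow> lin_form m w (unit_vec c) = w c"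
  by (simp add: lin_form_def sum_unit_vec_right)

lemma lin_form_bilinear_expand:
  assumes P: "bilinear_on a b c P" and u: "u \<in> vecs a" and v: "v \<in> vecs b"
  shows "lin_form c w (P u v) = (\<Sum>x<a. u x * mat_vec b (\<lambda>x y. lin_form c w (P (unit_vec x) (unit_vec y))) v x)"
proof -
  have "lin_form c w (P u v) = (\<Sum>x<a. u x * lin_form c w (P (unit_vec x) v))"
    by (rule linear_expand[OF _ _ u]) (use P v in \<open>auto simp: bilinear_on_def lin_form_add lin_form_smul\<close>)
  also have "\<dots> = (\<Sum>x<a. u x * (\<Sum>y<b. v y * lin_form c w (P (unit_vec x) (unit_vec y))))"
    by (intro sum.cong refl arg_cong[where f = "(*) _"] linear_expand[OF _ _ v])
      (use P in \<open>auto simp: bilinear_on_def lin_form_add lin_form_smul\<close>)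
  finally show ?thesis by (simp add: mat_vec_def mult.commute)
qed

lemma bilinear_on_zero_left:
  assumes "bilinear_on a b c P" and "v \<in> vecs b"
  shows "P (\<lambda>_. 0) v = (\<lambda>_. 0)"
proof -
  have "P (smul 0 (\<lambda>_. 0)) v = smul 0 (P (\<lambda>_. 0) v)"
    using assms zero_in_vecs[of a] unfolding bilinear_on_def by blast
  then show ?thesis by (simp add: smul_def)
qed

text \<open>The part of the DG algebra structure that is used; \<open>n1, n2, n3\<close> are the ranks of
  \<open>A\<^sub>1, A\<^sub>2, A\<^sub>3\<close>.\<close>

locale dga_matrices =
  fixes n1 n2 n3 :: nat
    and D1 D2 D3 :: "nat \<Rightarrow> nat \<Rightarrow> 'a::comm_ring_1"
    and m11 m12 :: "(nat \<Rightarrow> 'a) \<Rightarrow> (nat \<Rightarrow> 'a) \<Rightarrow> (nat \<Rightarrow> 'a)" and Eta :: "nat \<Rightarrow> 'a"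
  assumes bilinear_m11: "bilinear_on n1 n1 n2 m11"
    and bilinear_m12: "bilinear_on n1 n2 n3 m12"
    and m11_antisym: "\<And>e e'. e \<in> vecs n1 \<Longrightarrow> e' \<in> vecs n1 \<Longrightarrow> m11 e e' = (\<lambda>i. - m11 e' e i)"
    and leibniz_m12: "\<And>e f. e \<in> vecs n1 \<Longrightarrow> f \<in> vecs n2 \<Longrightarrow>
      mat_app n2 n3 D3 (m12 e f) = (\<lambda>i. mat_app 1 n1 D1 e 0 * f i + m11 (mat_app n1 n2 D2 f) e i)"
    and d3_inj: "\<And>v. v \<in> vecs n3 \<Longrightarrow> mat_app n2 n3 D3 v = (\<lambda>_. 0) \<Longrightarrow> v = (\<lambda>_. 0)"
    and d1_d2: "\<And>f. mat_app 1 n1 D1 (mat_app n1 n2 D2 f) = (\<lambda>_. 0)"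
    and d2_d3: "\<And>x. mat_app n1 n2 D2 (mat_app n2 n3 D3 x) = (\<lambda>_. 0)"
begin

definition T :: "nat \<Rightarrow> nat \<Rightarrow> 'a" where
  "T x y = lin_form n3 Eta (m12 (unit_vec x) (unit_vec y))"

lemma m12_in_vecs: "e \<in> vecs n1 \<Longrightarrow> f \<in> vecs n2 \<Longrightarrow> m12 e f \<in> vecs n3"
  using bilinear_m12 by (simp add: bilinear_on_def)

lemma eta_m12:
  assumes "e \<in> vecs n1" and "f \<in> vecs n2"
  shows "lin_form n3 Eta (m12 e f) = (\<Sum>a<n1. e a * mat_vec n2 T f a)"
  using lin_form_bilinear_expand[OF bilinear_m12 assms, of Eta] unfolding T_def[abs_def] .

lemma m12_d3:
  assumes e: "e \<in> vecs n1" and x: "x \<in> vecs n3"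
  shows "m12 e (mat_app n2 n3 D3 x) = smul (mat_app 1 n1 D1 e 0) x"
proof -
  let ?f = "mat_app n2 n3 D3 x" and ?s = "mat_app 1 n1 D1 e 0"
  have "mat_app n2 n3 D3 (m12 e ?f) = smul ?s ?f"
    using leibniz_m12[OF e mat_app_in_vecs] d2_d3 bilinear_on_zero_left[OF bilinear_m11 e]
    by (simp add: smul_def)
  then have "mat_app n2 n3 D3 (\<lambda>i. m12 e ?f i - smul ?s x i) = (\<lambda>_. 0)"
    by (simp add: mat_app_diff mat_app_smul)
  moreover have "(\<lambda>i. m12 e ?f i - smul ?s x i) \<in> vecs n3"
    using m12_in_vecs[OF e mat_app_in_vecs] x by (simp add: vecs_def smul_def)
  ultimately have "(\<lambda>i. m12 e ?f i - smul ?s x i) = (\<lambda>_. 0)" by (rule d3_inj[rotated])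
  then show ?thesis by (simp add: fun_eq_iff)
qed

lemma T_D3: "a < n1 \<Longrightarrow> c < n3 \<Longrightarrow> mat_mul n2 T D3 a c = D1 0 a * Eta c"
proof -
  assume a: "a < n1" and c: "c < n3"
  let ?f = "mat_app n2 n3 D3 (unit_vec c)"
  have "mat_mul n2 T D3 a c = mat_vec n2 T ?f a"
    unfolding mat_mul_def mat_vec_def by (intro sum.cong) (use c in \<open>auto simp: mat_app_unit_vec\<close>)
  also have "\<dots> = lin_form n3 Eta (m12 (unit_vec a) ?f)"
    using a by (simp add: eta_m12 sum_unit_vec_left)
  also have "\<dots> = D1 0 a * Eta c"
    using a c by (subst m12_d3) (simp_all add: lin_form_smul lin_form_unit_vec mat_app_unit_vec)
  finally show ?thesis .
qed

lemma T_antisym: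
  assumes b: "b < n2" and b': "b' < n2"
  shows "mat_mul n1 (tr D2) T b b' + mat_mul n1 (tr D2) T b' b = 0"
proof -
  let ?u = "mat_app n1 n2 D2 (unit_vec b)" and ?u' = "mat_app n1 n2 D2 (unit_vec b')"
  have u: "?u \<in> vecs n1" "?u' \<in> vecs n1" by simp_all
  have "lin_form n3 Eta (m12 (mat_app n1 n2 D2 (unit_vec b)) (unit_vec b')) = mat_mul n1 (tr D2) T b b'"
    if "b < n2" "b' < n2" for b b'
  proof -
    have "mat_vec n2 T (unit_vec b') a = T a b'" for a
      using that(2) by (simp add: mat_vec_def sum_unit_vec_right)
    then have "lin_form n3 Eta (m12 (mat_app n1 n2 D2 (unit_vec b)) (unit_vec b')) =
        (\<Sum>a<n1. mat_app n1 n2 D2 (unit_vec b) a * T a b')"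
      using eta_m12[OF mat_app_in_vecs, of "unit_vec b'"] that(2) by simp
    also have "\<dots> = mat_mul n1 (tr D2) T b b'"
      unfolding mat_mul_def tr_def using that(1) by (intro sum.cong) (simp_all add: mat_app_unit_vec)
    finally show ?thesis .
  qed
  \<comment> \<open>by Leibniz and \<open>d\<^sub>1 d\<^sub>2 = 0\<close>, \<open>d\<^sub>3(d\<^sub>2 f \<cdot> f' + d\<^sub>2 f' \<cdot> f) = d\<^sub>2 f' \<cdot> d\<^sub>2 f + d\<^sub>2 f \<cdot> d\<^sub>2 f' = 0\<close>\<close>
  moreover have "mat_app n2 n3 D3 (\<lambda>i. m12 ?u (unit_vec b') i + m12 ?u' (unit_vec b) i) = (\<lambda>_. 0)"
    using leibniz_m12[OF u(1), of "unit_vec b'"] leibniz_m12[OF u(2), of "unit_vec b"] b b'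
      d1_d2[of "unit_vec b"] d1_d2[of "unit_vec b'"] m11_antisym[OF u]
    by (simp add: mat_app_add fun_eq_iff)
  then have "(\<lambda>i. m12 ?u (unit_vec b') i + m12 ?u' (unit_vec b) i) = (\<lambda>_. 0)"
    by (rule d3_inj[rotated]) (use m12_in_vecs u b b' in simp)
  then have "lin_form n3 Eta (m12 ?u (unit_vec b')) + lin_form n3 Eta (m12 ?u' (unit_vec b)) = 0"
    using lin_form_add[of n3 Eta "m12 ?u (unit_vec b')" "m12 ?u' (unit_vec b)"] by (simp add: lin_form_def)
  ultimately show ?thesis using b b' by simp
qed

end

locale dga_splitting =
  fixes p q :: nat
    and D1 D2 D3 :: "nat \<Rightarrow> nat \<Rightarrow> 'a::comm_ring_1"
    and m11 m12 :: "(nat \<Rightarrow> 'a) \<Rightarrow> (nat \<Rightarrow> 'a) \<Rightarrow> (nat \<Rightarrow> 'a)"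
    and Iota Kap :: "nat \<Rightarrow> nat \<Rightarrow> 'a" and Lv Eta :: "nat \<Rightarrow> 'a"
  assumes acyclic: "acyclic_A p q D1 D2 D3"
    and dual_acyclic: "dual_acyclic_A p q D1 D2 D3"
    and dga: "dga_structure p q D1 D2 D3 m11 m12"
    and splitting: "decomposition q Iota Lv Kap Eta"
begin

sublocale A: dga_matrices "p + 2" "p + q" "q - 1" D1 D2 D3 m11 m12 Eta
proof unfold_locales
  show "mat_app (p + 2) (p + q) D2 (mat_app (p + q) (q - 1) D3 x) = (\<lambda>_. 0)" for x
  proof -
    have "mat_app (p + q) (q - 1) D3 (trunc_vec (q - 1) x) \<in> mker (p + 2) (p + q) D2"
      using acyclic by (auto simp: acyclic_A_def mimg_def)
    moreover have "mat_app (p + q) (q - 1) D3 (trunc_vec (q - 1) x) = mat_app (p + q) (q - 1) D3 x"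
      by (simp only: mat_app_eq_mat_vec mat_vec_trunc_vec)
    ultimately show ?thesis by (simp add: mker_def)
  qed
  show "mat_app 1 (p + 2) D1 (mat_app (p + 2) (p + q) D2 f) = (\<lambda>_. 0)" for f
  proof -
    have "mat_app (p + 2) (p + q) D2 (trunc_vec (p + q) f) \<in> mker 1 (p + 2) D1"
      using acyclic by (auto simp: acyclic_A_def mimg_def)
    moreover have "mat_app (p + 2) (p + q) D2 (trunc_vec (p + q) f) = mat_app (p + 2) (p + q) D2 f"
      by (simp only: mat_app_eq_mat_vec mat_vec_trunc_vec)
    ultimately show ?thesis by (simp add: mker_def)
  qed
  show "v = (\<lambda>_. 0)" if "v \<in> vecs (q - 1)" "mat_app (p + q) (q - 1) D3 v = (\<lambda>_. 0)" for v
    using acyclic that unfolding acyclic_A_def mker_def by blast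
qed (use dga in \<open>unfold dga_structure_def, blast+\<close>)

sublocale B: B_complex "p + 2" "p + q" "q - 1" "q - 2" D1 D2 D3 A.T Iota Kap Lv Eta p q m12
proof unfold_locales
  show "exact_at 1 (p + 2) (p + q) D1 D2" "exact_at (p + 2) (p + q) (q - 1) D2 D3"
    using acyclic by (simp_all add: acyclic_A_def exact_at_of_mker_subset)
  show "\<forall>i<q - 1. v i = 0" if "\<forall>i<p + q. mat_vec (q - 1) D3 v i = 0" for v
  proof -
    have "mat_app (p + q) (q - 1) D3 (trunc_vec (q - 1) v) = (\<lambda>_. 0)"
      using that by (simp add: mat_app_eq_mat_vec fun_eq_iff)
    then have "trunc_vec (q - 1) v = (\<lambda>_. 0)" by (rule A.d3_inj[rotated]) simp
    show ?thesis
    proof (intro allI impI)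
      fix i assume "i < q - 1"
      then show "v i = 0" using fun_cong[OF \<open>trunc_vec (q - 1) v = _\<close>, of i] by (simp add: trunc_vec_def)
    qed
  qed
  show "mat_mul (p + 2) D1 D2 0 c = 0" if "c < p + q" for c
    using acyclic that by (intro mat_mul_eq_0_of_mimg_subset[of _ _ D2 1]) (auto simp: acyclic_A_def)
  show "mat_mul (p + q) D2 D3 r c = 0" if "r < p + 2" "c < q - 1" for r c
    using acyclic that by (intro mat_mul_eq_0_of_mimg_subset[of _ _ D3 "p + 2"]) (auto simp: acyclic_A_def)
  show "exact_at (p + 2) 1 0 (tr D1) (tr (\<lambda>_ _. 0))"
    "exact_at (p + q) (p + 2) 1 (tr D2) (tr D1)" "exact_at (q - 1) (p + q) (p + 2) (tr D3) (tr D2)"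
    using dual_acyclic by (simp_all add: dual_acyclic_A_def exact_at_of_mker_subset mimg_0)
  show "mat_mul (p + q) A.T D3 a c = D1 0 a * Eta c" if "a < p + 2" "c < q - 1" for a c
    using that by (rule A.T_D3)
  show "mat_mul (p + 2) (tr D2) A.T b b' + mat_mul (p + 2) (tr D2) A.T b' b = 0"
    if "b < p + q" "b' < p + q" for b b'
    using that by (rule A.T_antisym)
  show "lin_form (q - 1) Eta (m12 e f) = (\<Sum>a<p + 2. e a * mat_vec (p + q) A.T f a)"
    if "e \<in> vecs (p + 2)" "f \<in> vecs (p + q)" for e f
    using that by (rule A.eta_m12)
qed (use splitting in \<open>simp_all add: decomposition_def lin_form_def\<close>)

end

theorem mainTheorem2:
  fixes p q :: nat
    and D1 D2 D3 :: "nat \<Rightarrow> nat \<Rightarrow> 'a::comm_ring_1"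
    and m11 m12 :: "(nat \<Rightarrow> 'a) \<Rightarrow> (nat \<Rightarrow> 'a) \<Rightarrow> (nat \<Rightarrow> 'a)"
    and Iota Kap :: "nat \<Rightarrow> nat \<Rightarrow> 'a" and Lv Eta :: "nat \<Rightarrow> 'a"
  assumes "noetherian_ring TYPE('a)"
    and "p \<ge> 1" and "q \<ge> 3"
    and "acyclic_A p q D1 D2 D3"
    and "dual_acyclic_A p q D1 D2 D3"
    and "dga_structure p q D1 D2 D3 m11 m12"
    and "decomposition q Iota Lv Kap Eta"
    and "grade (minor_ideal (p + q) (q - 2) (delta4_mat q D3 Iota)) \<ge> 4"
  shows "B_acyclic p q D2 D3 m12 Iota Eta \<and>
         (grade (minor_ideal (p + q) (q - 2) (delta4_mat q D3 Iota)) = 4 \<or>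
          minor_ideal (p + q) (q - 2) (delta4_mat q D3 Iota) = UNIV)"
proof -
  note noeth = assms(1)
  interpret dga_splitting p q D1 D2 D3 m11 m12 Iota Kap Lv Eta
    using assms(4-7) by (rule dga_splitting.intro)
  let ?J = "minor_ideal (p + q) (q - 2) B.M4"
  have J: "minor_ideal (p + q) (q - 2) (delta4_mat q D3 Iota) = ?J"
    unfolding delta4_mat_def B.M4_def ..
  have grade: "4 \<le> grade ?J" using assms(8) J by simp
  have "B_acyclic p q D2 D3 m12 Iota Eta"
    by (rule B.B_acyclic_if_eta_multiples_in_I) (rule B.in_I_if_eta_multiple_in_im_dual_D3[OF noeth grade])
  moreover have "grade ?J = 4 \<or> ?J = UNIV"
  proof (cases "ext_zero ?J 4")
    case True
    then show ?thesis using B.minor_ideal_eq_UNIV_if_ext_zero_4[OF noeth grade] by simp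
  next
    case False
    then show ?thesis using grade_eq_if_not_ext_zero[of 4 ?J] grade by (simp add: numeral_eq_enat)
  qed
  ultimately show ?thesis using J by simp
qed

end
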